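(* Let $h\le p$ and $W^\star\in\mathbb R^{h\times p}$ have mutually orthogonal nonzero rows, with all singular values in $[\alpha,\beta]$, $0<\alpha\le\beta$. Let $\sigma$ be differentiable and $\mathbf x\sim\mathcal N(0,I_p)$. Then the covariance matrix of $\sigma'(W^\star\mathbf x)\otimes\mathbf x\in\mathbb R^{hp}$ satisfies $\Sigma(\sigma'(W^\star\mathbf x)\otimes\mathbf x)\succeq\zeta(\alpha,\beta)I_{hp}$.
   Context: $\sigma'$ is applied entrywise; $\mathbf d\otimes\mathbf x$ concatenates $\mathbf d_1\mathbf x,\dots,\mathbf d_h\mathbf x$. For $g\sim\mathcal N(0,1)$ and $x\in\mathbb R$ let $\eta(x)=\sigma'(xg)$ (assume the relevant moments are finite). Define $\theta_1=\inf_{\alpha\le x,y\le\beta}\frac12\Big(\mathrm{var}[\eta(x)]+\mathrm{var}[\eta(y)]-\sqrt{(\mathrm{var}[\eta(x)]-\mathrm{var}[\eta(y)])^2+4\mathbb E[g\eta(x)]^2\mathbb E[g\eta(y)]^2}\Big)$, $\theta_2=\inf_{\alpha\le x\le\beta}\mathrm{var}[g\eta(x)]-\mathbb E[g^2\eta(x)]^2$, and $\zeta(\alpha,\beta)=\min\{\theta_1,\theta_2\}$. *)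

theory Defs
  imports "HOL-Probability.Probability"
begin

definition std_normal :: "real measure" where
  "std_normal = density lborel std_normal_density"

definition gauss_vec :: "nat \<Rightarrow> (nat \<Rightarrow> real) measure" where
  "gauss_vec p = PiM {..<p} (\<lambda>_. std_normal)"

definition Eg :: "(real \<Rightarrow> real) \<Rightarrow> real" where
  "Eg f = integral\<^sup>L std_normal f"

definition Varg :: "(real \<Rightarrow> real) \<Rightarrow> real" where
  "Varg f = Eg (\<lambda>g. (f g)\<^sup>2) - (Eg f)\<^sup>2"

definition eta :: "(real \<Rightarrow> real) \<Rightarrow> real \<Rightarrow> real \<Rightarrow> real" where
  "eta \<sigma> x g = deriv \<sigma> (x * g)"

definition theta1 :: "(real \<Rightarrow> real) \<Rightarrow> real \<Rightarrow> real \<Rightarrow> real" where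
  "theta1 \<sigma> \<alpha> \<beta> = Inf ((\<lambda>(x, y).
      (Varg (eta \<sigma> x) + Varg (eta \<sigma> y)
       - sqrt ((Varg (eta \<sigma> x) - Varg (eta \<sigma> y))\<^sup>2
               + 4 * (Eg (\<lambda>g. g * eta \<sigma> x g))\<^sup>2 * (Eg (\<lambda>g. g * eta \<sigma> y g))\<^sup>2)) / 2)
      ` ({\<alpha>..\<beta>} \<times> {\<alpha>..\<beta>}))"

definition theta2 :: "(real \<Rightarrow> real) \<Rightarrow> real \<Rightarrow> real \<Rightarrow> real" where
  "theta2 \<sigma> \<alpha> \<beta> = Inf ((\<lambda>x. Varg (\<lambda>g. g * eta \<sigma> x g) - (Eg (\<lambda>g. g\<^sup>2 * eta \<sigma> x g))\<^sup>2)
      ` {\<alpha>..\<beta>})"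

definition zeta :: "(real \<Rightarrow> real) \<Rightarrow> real \<Rightarrow> real \<Rightarrow> real" where
  "zeta \<sigma> \<alpha> \<beta> = min (theta1 \<sigma> \<alpha> \<beta>) (theta2 \<sigma> \<alpha> \<beta>)"

text \<open>Singular values of an h x p matrix W (h \<le> p), given as nat \<Rightarrow> nat \<Rightarrow> real with
  row indices < h and column indices < p: the nonnegative square roots of the eigenvalues
  of the h x h matrix W W^T.\<close>
definition singular_values :: "nat \<Rightarrow> nat \<Rightarrow> (nat \<Rightarrow> nat \<Rightarrow> real) \<Rightarrow> real set" where
  "singular_values h p W = {s. s \<ge> 0 \<and> (\<exists>v. (\<exists>i<h. v i \<noteq> 0) \<and>
      (\<forall>i<h. (\<Sum>j<h. (\<Sum>k<p. W i k * W j k) * v j) = s\<^sup>2 * v i))}"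

definition cov_matrix :: "'a measure \<Rightarrow> (nat \<Rightarrow> 'a \<Rightarrow> real) \<Rightarrow> nat \<Rightarrow> nat \<Rightarrow> real" where
  "cov_matrix M Z a b = integral\<^sup>L M (\<lambda>x. Z a x * Z b x)
                        - integral\<^sup>L M (Z a) * integral\<^sup>L M (Z b)"

definition loewner_ge_scalar :: "nat \<Rightarrow> (nat \<Rightarrow> nat \<Rightarrow> real) \<Rightarrow> real \<Rightarrow> bool" where
  "loewner_ge_scalar n A c \<longleftrightarrow>
     (\<forall>v. (\<Sum>a<n. \<Sum>b<n. v a * (A a b - (if a = b then c else 0)) * v b) \<ge> 0)"

text \<open>The random vector sigma'(W x) \<otimes> x in R^{hp}: component a = i*p + j (i < h, j < p)
  is sigma'(w_i . x) * x_j.\<close>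
definition kron_feature :: "nat \<Rightarrow> (real \<Rightarrow> real) \<Rightarrow> (nat \<Rightarrow> nat \<Rightarrow> real) \<Rightarrow> nat \<Rightarrow> (nat \<Rightarrow> real) \<Rightarrow> real" where
  "kron_feature p \<sigma> W a x = deriv \<sigma> (\<Sum>k<p. W (a div p) k * x k) * x (a mod p)"

end

theory Submission
  imports Defs
begin

text \<open>The rows of \<open>W\<close> are orthogonal, so an orthogonal change of variables \<open>y = T x\<close>, composed of
  plane rotations and reflections and hence preserving \<open>N(0, I\<^sub>p)\<close>, sends the normalised rows to
  the first \<open>h\<close> coordinate vectors. Then \<open>\<sigma>'(w\<^sub>i \<cdot> x) x\<^sub>j = \<sigma>'(s\<^sub>i y\<^sub>i) x\<^sub>j\<close> with \<open>x\<^sub>j\<close> a linear form in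
  \<open>y\<close> and \<open>s\<^sub>i = |w\<^sub>i|\<close> a singular value, so for \<open>v \<in> \<real>\<^bsup>hp\<^esup>\<close> the variance of \<open>v \<cdot> (\<sigma>'(W x) \<otimes> x)\<close> is the
  variance of \<open>G(y) = \<Sum> c\<^sub>i\<^sub>k \<sigma>'(s\<^sub>i y\<^sub>i) y\<^sub>k\<close> with \<open>\<Sum> c\<^sub>i\<^sub>k\<^sup>2 = |v|\<^sup>2\<close>. Independence of the coordinates
  makes \<open>Var G\<close> explicit: a square, diagonal terms bounded below by \<open>\<theta>\<^sub>2\<close> and by \<open>var \<eta>\<close>, and the
  pairs \<open>(c\<^sub>i\<^sub>j, c\<^sub>j\<^sub>i)\<close>, coupled through \<open>E[g\<eta>(s\<^sub>i)] E[g\<eta>(s\<^sub>j)]\<close>, each bounded below by the smaller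
  eigenvalue of a \<open>2 \<times> 2\<close> matrix, i.e. by \<open>\<theta>\<^sub>1\<close>.\<close>

section \<open>The standard Gaussian\<close>

lemma prob_space_std_normal: "prob_space std_normal"
  unfolding std_normal_def by (simp add: prob_space_normal_density)

lemma sets_std_normal [simp, measurable_cong]: "sets std_normal = sets borel"
  unfolding std_normal_def by simp

lemma space_std_normal [simp]: "space std_normal = UNIV"
  unfolding std_normal_def by simp

lemma nn_integral_std_normal:
  "f \<in> borel_measurable borel \<Longrightarrow>
     (\<integral>\<^sup>+a. f a \<partial>std_normal) = (\<integral>\<^sup>+a. ennreal (std_normal_density a) * f a \<partial>lborel)"
  unfolding std_normal_def by (subst nn_integral_density) auto

lemma integrable_std_normal_power: "integrable std_normal (\<lambda>t. t ^ n)"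
  unfolding std_normal_def
  by (subst integrable_density) (auto simp: integrable_std_normal_moment)

lemma integrable_std_normal_const [simp]: "integrable std_normal (\<lambda>_. c :: real)"
  using prob_space_std_normal by (simp add: prob_space_def finite_measure.integrable_const)

lemma Eg_const: "Eg (\<lambda>_. c) = c"
  unfolding Eg_def using prob_space.prob_space[OF prob_space_std_normal] by simp

lemma Eg_ident: "Eg (\<lambda>t. t) = 0"
proof -
  have "Eg (\<lambda>t. t) = integral\<^sup>L lborel (\<lambda>x. std_normal_density x * x ^ (2 * 0 + 1))"
    unfolding Eg_def std_normal_def by (subst integral_density) auto
  then show ?thesis using integral_std_normal_moment_odd[of 0] by simp
qed

lemma Eg_square: "Eg (\<lambda>t. t\<^sup>2) = 1"
proof -
  have "Eg (\<lambda>t. t\<^sup>2) = integral\<^sup>L lborel (\<lambda>x. std_normal_density x * x ^ (2 * 1))"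
    unfolding Eg_def std_normal_def by (subst integral_density) auto
  then show ?thesis using integral_std_normal_moment_even[of 1] by simp
qed

lemma abs_power_le_1_plus_power4:
  fixes t :: real
  assumes "n \<le> 4"
  shows "\<bar>t\<bar> ^ n \<le> 1 + t ^ 4"
proof (cases "\<bar>t\<bar> \<le> 1")
  case True
  then have "\<bar>t\<bar> ^ n \<le> 1" by (simp add: power_le_one)
  moreover have "0 \<le> t ^ 4" by (simp add: zero_le_even_power)
  ultimately show ?thesis by linarith
next
  case False
  then have "\<bar>t\<bar> ^ n \<le> \<bar>t\<bar> ^ 4" using assms by (intro power_increasing) auto
  then show ?thesis by (simp add: power_abs)
qed

lemma abs_power_mult_power_le:
  fixes y t :: real
  assumes "a \<le> 2" "b \<le> 2"
  shows "\<bar>y ^ a * t ^ b\<bar> \<le> 1 + t ^ 4 + y\<^sup>2 + (t\<^sup>2 * y)\<^sup>2"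
proof -
  have tb: "\<bar>t\<bar> ^ b \<le> 1 + t ^ 4" "\<bar>t\<bar> ^ (2 * b) \<le> 1 + t ^ 4"
    using assms(2) by (auto intro: abs_power_le_1_plus_power4)
  have nonneg: "0 \<le> t ^ 4" "0 \<le> (t\<^sup>2 * y)\<^sup>2" by (simp_all add: zero_le_even_power)
  consider "a = 0" | "a = 1" | "a = 2" using assms(1) by linarith
  then show ?thesis
  proof cases
    case 1
    then have "\<bar>y ^ a * t ^ b\<bar> = \<bar>t\<bar> ^ b" by (simp add: power_abs)
    then show ?thesis using tb(1) nonneg zero_le_power2[of y] by linarith
  next
    case 2
    have "2 * (\<bar>y\<bar> * \<bar>t\<bar> ^ b) \<le> \<bar>y\<bar>\<^sup>2 + (\<bar>t\<bar> ^ b)\<^sup>2"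
      using sum_squares_bound[of "\<bar>y\<bar>" "\<bar>t\<bar> ^ b"] by (simp add: power2_eq_square)
    also have "(\<bar>t\<bar> ^ b)\<^sup>2 = \<bar>t\<bar> ^ (2 * b)" by (simp add: power_mult[symmetric] mult.commute)
    finally have "2 * (\<bar>y\<bar> * \<bar>t\<bar> ^ b) \<le> y\<^sup>2 + (1 + t ^ 4)" using tb(2) by simp
    moreover have "\<bar>y ^ a * t ^ b\<bar> = \<bar>y\<bar> * \<bar>t\<bar> ^ b" using 2 by (simp add: abs_mult power_abs)
    moreover have "0 \<le> \<bar>y\<bar> * \<bar>t\<bar> ^ b" by simp
    ultimately show ?thesis using nonneg by linarith
  next
    case 3
    have "y\<^sup>2 * \<bar>t\<bar> ^ b \<le> y\<^sup>2 * (1 + t ^ 4)" using tb(1) by (intro mult_left_mono) auto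
    also have "\<dots> = y\<^sup>2 + (t\<^sup>2 * y)\<^sup>2" by (simp add: algebra_simps power2_eq_square power4_eq_xxxx)
    finally have "y\<^sup>2 * \<bar>t\<bar> ^ b \<le> y\<^sup>2 + (t\<^sup>2 * y)\<^sup>2" .
    moreover have "\<bar>y ^ a * t ^ b\<bar> = y\<^sup>2 * \<bar>t\<bar> ^ b" using 3 by (simp add: abs_mult power_abs)
    ultimately show ?thesis using nonneg by linarith
  qed
qed

lemma integrable_std_normal_power_mult:
  fixes H :: "real \<Rightarrow> real"
  assumes [measurable]: "H \<in> borel_measurable borel"
    and "integrable std_normal (\<lambda>t. (H t)\<^sup>2)" "integrable std_normal (\<lambda>t. (t\<^sup>2 * H t)\<^sup>2)"
    and "a \<le> 2" "b \<le> 2"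
  shows "integrable std_normal (\<lambda>t. H t ^ a * t ^ b)"
proof (rule Bochner_Integration.integrable_bound)
  show "integrable std_normal (\<lambda>t. 1 + t ^ 4 + (H t)\<^sup>2 + (t\<^sup>2 * H t)\<^sup>2)"
    using assms integrable_std_normal_power[of 4] by simp
  show "AE t in std_normal. norm (H t ^ a * t ^ b) \<le> norm (1 + t ^ 4 + (H t)\<^sup>2 + (t\<^sup>2 * H t)\<^sup>2)"
    using abs_power_mult_power_le[OF assms(4,5)] by (intro AE_I2) (simp add: zero_le_even_power)
qed measurable

lemma borel_measurable_deriv:
  fixes f :: "real \<Rightarrow> real"
  assumes "\<And>t. f differentiable (at t)"
  shows "deriv f \<in> borel_measurable borel"
proof -
  have "continuous_on UNIV f"
    using assms differentiable_imp_continuous_within continuous_at_imp_continuous_on by blast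
  then have [measurable]: "f \<in> borel_measurable borel" by (rule borel_measurable_continuous_onI)
  define u where "u n t = (f (t + inverse (real (Suc n))) - f t) / inverse (real (Suc n))" for n t
  show ?thesis
  proof (rule borel_measurable_LIMSEQ_real[where u = u])
    show "u n \<in> borel_measurable borel" for n unfolding u_def by measurable
  next
    fix t :: real
    have "DERIV f t :> deriv f t" using assms DERIV_deriv_iff_real_differentiable by blast
    then have "((\<lambda>h. (f (t + h) - f t) / h) \<longlongrightarrow> deriv f t) (at 0)" by (simp add: DERIV_def)
    moreover have "filterlim (\<lambda>n. inverse (real (Suc n))) (at 0) sequentially"
      unfolding filterlim_at using LIMSEQ_inverse_real_of_nat by auto
    ultimately show "(\<lambda>n. u n t) \<longlonglongrightarrow> deriv f t"
      unfolding u_def by (rule filterlim_compose)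
  qed
qed

section \<open>Rotation invariance of the planar Gaussian\<close>

definition nn_integral_lborel2 :: "(real \<Rightarrow> real \<Rightarrow> ennreal) \<Rightarrow> ennreal" where
  "nn_integral_lborel2 P = (\<integral>\<^sup>+b. \<integral>\<^sup>+a. P a b \<partial>lborel \<partial>lborel)"

lemma nn_integral_lborel2_swap:
  assumes [measurable]: "(\<lambda>(a, b). P a b) \<in> borel_measurable (borel \<Otimes>\<^sub>M borel)"
  shows "nn_integral_lborel2 P = (\<integral>\<^sup>+a. \<integral>\<^sup>+b. P a b \<partial>lborel \<partial>lborel)"
proof -
  have "sets (lborel \<Otimes>\<^sub>M lborel) = sets (borel \<Otimes>\<^sub>M (borel :: real measure))"
    by (rule sets_pair_measure_cong) auto
  then have "(\<lambda>(a, b). P a b) \<in> borel_measurable (lborel \<Otimes>\<^sub>M lborel)"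
    using assms measurable_cong_sets by blast
  then show ?thesis
    using pair_sigma_finite.Fubini'[of lborel lborel P]
    by (simp add: nn_integral_lborel2_def pair_sigma_finite_def lborel.sigma_finite_measure_axioms)
qed

lemma nn_integral_lborel2_shear_fst:
  assumes [measurable]: "(\<lambda>(a, b). P a b) \<in> borel_measurable (borel \<Otimes>\<^sub>M borel)"
  shows "nn_integral_lborel2 (\<lambda>a b. P (a + t * b) b) = nn_integral_lborel2 P"
  unfolding nn_integral_lborel2_def
proof (rule nn_integral_cong)
  fix b :: real
  have "(\<lambda>a. P a b) \<in> borel_measurable borel" by measurable
  then show "(\<integral>\<^sup>+a. P (a + t * b) b \<partial>lborel) = (\<integral>\<^sup>+a. P a b \<partial>lborel)"
    using nn_integral_real_affine[of "\<lambda>a. P a b" 1 "t * b"] by (simp add: add.commute)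
qed

lemma nn_integral_lborel2_shear_snd:
  assumes P [measurable]: "(\<lambda>(a, b). P a b) \<in> borel_measurable (borel \<Otimes>\<^sub>M borel)"
  shows "nn_integral_lborel2 (\<lambda>a b. P a (b + t * a)) = nn_integral_lborel2 P"
proof -
  have "(\<lambda>(a, b). P a (b + t * a)) \<in> borel_measurable (borel \<Otimes>\<^sub>M borel)" by measurable
  then have "nn_integral_lborel2 (\<lambda>a b. P a (b + t * a))
      = (\<integral>\<^sup>+a. \<integral>\<^sup>+b. P a (b + t * a) \<partial>lborel \<partial>lborel)"
    by (rule nn_integral_lborel2_swap)
  also have "\<dots> = (\<integral>\<^sup>+a. \<integral>\<^sup>+b. P a b \<partial>lborel \<partial>lborel)"
  proof (rule nn_integral_cong)
    fix a :: real
    have "(\<lambda>b. P a b) \<in> borel_measurable borel" by measurable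
    then show "(\<integral>\<^sup>+b. P a (b + t * a) \<partial>lborel) = (\<integral>\<^sup>+b. P a b \<partial>lborel)"
      using nn_integral_real_affine[of "\<lambda>b. P a b" 1 "t * a"] by (simp add: add.commute)
  qed
  also have "\<dots> = nn_integral_lborel2 P" by (rule nn_integral_lborel2_swap[OF P, symmetric])
  finally show ?thesis .
qed

lemma nn_integral_lborel2_neg:
  assumes [measurable]: "(\<lambda>(a, b). P a b) \<in> borel_measurable (borel \<Otimes>\<^sub>M borel)"
  shows "nn_integral_lborel2 (\<lambda>a b. P (- a) (- b)) = nn_integral_lborel2 P"
proof -
  have "(\<integral>\<^sup>+a. P (- a) (- b) \<partial>lborel) = (\<integral>\<^sup>+a. P a (- b) \<partial>lborel)" for b
  proof -
    have "(\<lambda>a. P a (- b)) \<in> borel_measurable borel" by measurable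
    then show ?thesis using nn_integral_real_affine[of "\<lambda>a. P a (- b)" "-1" 0] by simp
  qed
  moreover have "(\<lambda>b. \<integral>\<^sup>+a. P a b \<partial>lborel) \<in> borel_measurable borel" by measurable
  ultimately show ?thesis
    unfolding nn_integral_lborel2_def
    using nn_integral_real_affine[of "\<lambda>b. \<integral>\<^sup>+a. P a b \<partial>lborel" "-1" 0] by simp
qed

text \<open>A rotation by an angle other than \<open>\<pi>\<close> is a product of three shears.\<close>

lemma nn_integral_lborel2_rotation:
  assumes P [measurable]: "(\<lambda>(a, b). P a b) \<in> borel_measurable (borel \<Otimes>\<^sub>M borel)"
    and cs: "c\<^sup>2 + s\<^sup>2 = 1"
  shows "nn_integral_lborel2 (\<lambda>a b. P (c * a + s * b) (- s * a + c * b)) = nn_integral_lborel2 P"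
proof (cases "c = -1")
  case True
  then have "s = 0" using cs by (simp add: power2_eq_square)
  then show ?thesis using True nn_integral_lborel2_neg[OF P] by simp
next
  case False
  define t where "t = s / (1 + c)"
  have c1: "1 + c \<noteq> 0" using False by auto
  have ts: "t * s = 1 - c" and tc: "t * (1 + c) = s"
    using cs c1 unfolding t_def by (auto simp: field_simps power2_eq_square)
  define P1 where "P1 a b = P (a + t * b) b" for a b
  define P2 where "P2 a b = P1 a (b + (- s) * a)" for a b
  have [measurable]: "(\<lambda>(a, b). P1 a b) \<in> borel_measurable (borel \<Otimes>\<^sub>M borel)"
    unfolding P1_def by measurable
  have [measurable]: "(\<lambda>(a, b). P2 a b) \<in> borel_measurable (borel \<Otimes>\<^sub>M borel)"
    unfolding P2_def by measurable
  have "a + t * b + t * (b + - s * (a + t * b)) = c * a + s * b"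
    and "b + - s * (a + t * b) = - s * a + c * b" for a b
  proof -
    have "a + t * b + t * (b + - s * (a + t * b)) = (1 - t * s) * a + (2 - t * s) * t * b"
      by (simp add: algebra_simps)
    also have "\<dots> = c * a + (t * (1 + c)) * b"
      unfolding ts by (simp add: algebra_simps)
    also have "\<dots> = c * a + s * b" using tc by simp
    finally show "a + t * b + t * (b + - s * (a + t * b)) = c * a + s * b" .
    have "b + - s * (a + t * b) = - s * a + (1 - t * s) * b" by (simp add: algebra_simps)
    then show "b + - s * (a + t * b) = - s * a + c * b" unfolding ts by simp
  qed
  then have "(\<lambda>a b. P (c * a + s * b) (- s * a + c * b)) = (\<lambda>a b. P2 (a + t * b) b)"
    unfolding P2_def P1_def by simp
  moreover have "nn_integral_lborel2 (\<lambda>a b. P2 (a + t * b) b) = nn_integral_lborel2 P2"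
    by (rule nn_integral_lborel2_shear_fst) measurable
  moreover have "nn_integral_lborel2 P2 = nn_integral_lborel2 P1"
    unfolding P2_def by (rule nn_integral_lborel2_shear_snd) measurable
  moreover have "nn_integral_lborel2 P1 = nn_integral_lborel2 P"
    unfolding P1_def by (rule nn_integral_lborel2_shear_fst[OF P])
  ultimately show ?thesis by simp
qed

lemma nn_integral_std_normal2:
  assumes [measurable]: "(\<lambda>(a, b). F a b) \<in> borel_measurable (borel \<Otimes>\<^sub>M borel)"
  shows "(\<integral>\<^sup>+b. \<integral>\<^sup>+a. F a b \<partial>std_normal \<partial>std_normal)
     = nn_integral_lborel2 (\<lambda>a b. ennreal (std_normal_density a * std_normal_density b) * F a b)"
proof -
  have "(\<integral>\<^sup>+b. \<integral>\<^sup>+a. F a b \<partial>std_normal \<partial>std_normal)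
      = (\<integral>\<^sup>+b. ennreal (std_normal_density b) *
            (\<integral>\<^sup>+a. ennreal (std_normal_density a) * F a b \<partial>lborel) \<partial>lborel)"
    by (simp add: nn_integral_std_normal)
  also have "\<dots> = nn_integral_lborel2 (\<lambda>a b. ennreal (std_normal_density a * std_normal_density b) * F a b)"
    unfolding nn_integral_lborel2_def
    by (intro nn_integral_cong, subst nn_integral_cmult[symmetric], measurable)
       (auto intro!: nn_integral_cong simp: ennreal_mult mult_ac)
  finally show ?thesis .
qed

lemma std_normal_density_rotation:
  assumes "c\<^sup>2 + s\<^sup>2 = 1"
  shows "std_normal_density (c * a + s * b) * std_normal_density (- s * a + c * b)
       = std_normal_density a * std_normal_density b"
proof -
  have "(c * a + s * b)\<^sup>2 + (- s * a + c * b)\<^sup>2 = (c\<^sup>2 + s\<^sup>2) * (a\<^sup>2 + b\<^sup>2)"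
    by (simp add: power2_eq_square algebra_simps)
  then have "(c * a + s * b)\<^sup>2 + (- s * a + c * b)\<^sup>2 = a\<^sup>2 + b\<^sup>2" using assms by simp
  moreover have "std_normal_density x * std_normal_density y
      = (1 / sqrt (2 * pi))\<^sup>2 * exp (- (x\<^sup>2 + y\<^sup>2) / 2)" for x y
    by (simp add: std_normal_density_def power2_eq_square exp_add[symmetric] field_simps)
  ultimately show ?thesis by simp
qed

lemma nn_integral_std_normal2_rotation:
  assumes F [measurable]: "(\<lambda>(a, b). F a b) \<in> borel_measurable (borel \<Otimes>\<^sub>M borel)"
    and cs: "c\<^sup>2 + s\<^sup>2 = 1"
  shows "(\<integral>\<^sup>+b. \<integral>\<^sup>+a. F (c * a + s * b) (- s * a + c * b) \<partial>std_normal \<partial>std_normal)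
       = (\<integral>\<^sup>+b. \<integral>\<^sup>+a. F a b \<partial>std_normal \<partial>std_normal)"
proof -
  define Q where "Q a b = ennreal (std_normal_density a * std_normal_density b) * F a b" for a b
  have [measurable]: "(\<lambda>(a, b). Q a b) \<in> borel_measurable (borel \<Otimes>\<^sub>M borel)"
    unfolding Q_def by measurable
  have "(\<integral>\<^sup>+b. \<integral>\<^sup>+a. F (c * a + s * b) (- s * a + c * b) \<partial>std_normal \<partial>std_normal)
      = nn_integral_lborel2 (\<lambda>a b. Q (c * a + s * b) (- s * a + c * b))"
    unfolding Q_def std_normal_density_rotation[OF cs]
    by (rule nn_integral_std_normal2) measurable
  also have "\<dots> = nn_integral_lborel2 Q" by (rule nn_integral_lborel2_rotation) (use cs in auto)
  also have "\<dots> = (\<integral>\<^sup>+b. \<integral>\<^sup>+a. F a b \<partial>std_normal \<partial>std_normal)"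
    unfolding Q_def by (rule nn_integral_std_normal2[OF F, symmetric])
  finally show ?thesis .
qed

lemma nn_integral_std_normal_reflection:
  assumes [measurable]: "g \<in> borel_measurable borel"
  shows "(\<integral>\<^sup>+a. g (- a) \<partial>std_normal) = (\<integral>\<^sup>+a. g a \<partial>std_normal)"
proof -
  have "(\<lambda>x. ennreal (std_normal_density x) * g x) \<in> borel_measurable borel" by measurable
  then have "(\<integral>\<^sup>+a. ennreal (std_normal_density a) * g a \<partial>lborel)
      = (\<integral>\<^sup>+a. ennreal (std_normal_density (- a)) * g (- a) \<partial>lborel)"
    using nn_integral_real_affine[of "\<lambda>x. ennreal (std_normal_density x) * g x" "-1" 0] by simp
  then show ?thesis by (simp add: nn_integral_std_normal std_normal_density_def)
qed

section \<open>Orthogonal symmetries of the standard Gaussian vector\<close>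

lemma distr_eqI_nn_integral:
  assumes T: "T \<in> M \<rightarrow>\<^sub>M M"
    and nn: "\<And>f. f \<in> borel_measurable M \<Longrightarrow> (\<integral>\<^sup>+x. f (T x) \<partial>M) = (\<integral>\<^sup>+x. f x \<partial>M)"
  shows "distr M M T = M"
proof (rule measure_eqI)
  fix A assume "A \<in> sets (distr M M T)"
  then have A: "A \<in> sets M" by simp
  have "emeasure (distr M M T) A = (\<integral>\<^sup>+x. indicator (T -` A \<inter> space M) x \<partial>M)"
    using emeasure_distr[OF T A] measurable_sets[OF T A] by simp
  also have "\<dots> = (\<integral>\<^sup>+x. indicator A (T x) \<partial>M)"
    by (intro nn_integral_cong) (auto simp: indicator_def)
  also have "\<dots> = emeasure M A" using nn[of "indicator A"] A by simp
  finally show "emeasure (distr M M T) A = emeasure M A" .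
qed simp

lemma product_sigma_finite_std_normal: "product_sigma_finite (\<lambda>_ :: nat. std_normal)"
proof -
  have "product_prob_space (\<lambda>_ :: nat. std_normal)"
    by (rule product_prob_spaceI) (rule prob_space_std_normal)
  then show ?thesis unfolding product_prob_space_def by simp
qed

lemma measurable_gauss_vec_component:
  "j < p \<Longrightarrow> (\<lambda>x. x j) \<in> borel_measurable (gauss_vec p)"
  using measurable_component_singleton[of j "{..<p}" "\<lambda>_. std_normal"]
  by (simp add: gauss_vec_def)

lemma measurable_gauss_vec_update:
  assumes "j < p" and "f \<in> borel_measurable (gauss_vec p)"
    and "g \<in> gauss_vec p \<rightarrow>\<^sub>M gauss_vec p"
  shows "(\<lambda>x. (g x)(j := f x)) \<in> gauss_vec p \<rightarrow>\<^sub>M gauss_vec p"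
proof -
  have "{..<p} = {..<p} \<union> {j}" using assms by auto
  then show ?thesis
    using measurable_fun_upd[of "{..<p}" "{..<p}" j g "gauss_vec p" "\<lambda>_. std_normal"] assms
    by (simp add: gauss_vec_def)
qed

definition plane_rotation :: "nat \<Rightarrow> nat \<Rightarrow> real \<Rightarrow> real \<Rightarrow> (nat \<Rightarrow> real) \<Rightarrow> nat \<Rightarrow> real" where
  "plane_rotation j k c s x = (x(j := c * x j + s * x k))(k := - s * x j + c * x k)"

definition coord_reflection :: "nat \<Rightarrow> (nat \<Rightarrow> real) \<Rightarrow> nat \<Rightarrow> real" where
  "coord_reflection j x = x(j := - x j)"

lemma plane_rotation_measurable:
  assumes "j < p" "k < p"
  shows "plane_rotation j k c s \<in> gauss_vec p \<rightarrow>\<^sub>M gauss_vec p"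
  unfolding plane_rotation_def using assms
  by (intro measurable_gauss_vec_update)
     (auto intro!: borel_measurable_add borel_measurable_diff borel_measurable_times
        borel_measurable_const measurable_gauss_vec_component)

lemma coord_reflection_measurable:
  "j < p \<Longrightarrow> coord_reflection j \<in> gauss_vec p \<rightarrow>\<^sub>M gauss_vec p"
  unfolding coord_reflection_def
  by (intro measurable_gauss_vec_update) (auto intro!: borel_measurable_uminus measurable_gauss_vec_component)

lemma nn_integral_gauss_vec_two_coords:
  assumes jk: "j < p" "k < p" "j \<noteq> k"
    and g [measurable]: "g \<in> borel_measurable (gauss_vec p)"
  shows "(\<integral>\<^sup>+x. g x \<partial>gauss_vec p)
    = (\<integral>\<^sup>+y. \<integral>\<^sup>+b. \<integral>\<^sup>+a. g ((y(k := b))(j := a)) \<partial>std_normal \<partial>std_normal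
          \<partial>PiM ({..<p} - {j, k}) (\<lambda>_. std_normal))"
proof -
  define J where "J = {..<p} - {j, k}"
  have J: "finite J" "finite (insert k J)" "j \<notin> insert k J" "k \<notin> J"
    unfolding J_def using jk by auto
  have pK: "{..<p} = insert j (insert k J)" unfolding J_def using jk by auto
  note insert = product_sigma_finite.product_nn_integral_insert[OF product_sigma_finite_std_normal]
  have g': "g \<in> borel_measurable (PiM (insert j (insert k J)) (\<lambda>_. std_normal))"
    using g pK by (simp add: gauss_vec_def)
  have "(\<lambda>(x, a). g (x(j := a))) \<in> borel_measurable (PiM (insert k J) (\<lambda>_. std_normal) \<Otimes>\<^sub>M std_normal)"
    using measurable_compose[OF measurable_add_dim[of j "insert k J" "\<lambda>_. std_normal"] g']
    by (simp add: case_prod_beta')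
  from sigma_finite_measure.borel_measurable_nn_integral_fst
         [OF prob_space_imp_sigma_finite[OF prob_space_std_normal] this]
  have inner: "(\<lambda>x. \<integral>\<^sup>+a. g (x(j := a)) \<partial>std_normal) \<in> borel_measurable (PiM (insert k J) (\<lambda>_. std_normal))"
    by simp
  have "(\<integral>\<^sup>+x. g x \<partial>gauss_vec p)
      = (\<integral>\<^sup>+x. \<integral>\<^sup>+a. g (x(j := a)) \<partial>std_normal \<partial>PiM (insert k J) (\<lambda>_. std_normal))"
    unfolding gauss_vec_def pK by (rule insert[OF J(2,3) g'])
  also have "\<dots> = (\<integral>\<^sup>+y. \<integral>\<^sup>+b. \<integral>\<^sup>+a. g ((y(k := b))(j := a)) \<partial>std_normal \<partial>std_normal
                     \<partial>PiM J (\<lambda>_. std_normal))"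
    by (rule insert[OF J(1,4) inner])
  finally show ?thesis unfolding J_def .
qed

lemma measurable_update_two_coords:
  assumes jk: "j < p" "k < p" and y: "y \<in> space (PiM ({..<p} - {j, k}) (\<lambda>_. std_normal))"
  shows "(\<lambda>(a, b). (y(k := b))(j := a)) \<in> (borel \<Otimes>\<^sub>M borel) \<rightarrow>\<^sub>M gauss_vec p"
proof -
  define J where "J = {..<p} - {j, k}"
  have I1: "insert k J = J \<union> {k}" by auto
  have I2: "{..<p} = insert k J \<union> {j}" unfolding J_def using jk by auto
  have "(\<lambda>z. y(k := snd z)) \<in> (borel \<Otimes>\<^sub>M borel) \<rightarrow>\<^sub>M PiM (insert k J) (\<lambda>_. std_normal)"
    by (rule measurable_fun_upd[OF I1]) (use y in \<open>auto simp: J_def\<close>)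
  then have "(\<lambda>z. (y(k := snd z))(j := fst z)) \<in> (borel \<Otimes>\<^sub>M borel) \<rightarrow>\<^sub>M PiM {..<p} (\<lambda>_. std_normal)"
    by (rule measurable_fun_upd[OF I2]) auto
  then show ?thesis by (simp add: case_prod_beta' gauss_vec_def)
qed

lemma nn_integral_plane_rotation:
  assumes jk: "j < p" "k < p" "j \<noteq> k" and cs: "c\<^sup>2 + s\<^sup>2 = 1"
    and f [measurable]: "f \<in> borel_measurable (gauss_vec p)"
  shows "(\<integral>\<^sup>+x. f (plane_rotation j k c s x) \<partial>gauss_vec p) = (\<integral>\<^sup>+x. f x \<partial>gauss_vec p)"
proof -
  have "(\<lambda>x. f (plane_rotation j k c s x)) \<in> borel_measurable (gauss_vec p)"
    using measurable_compose[OF plane_rotation_measurable[OF jk(1,2)] f] .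
  then have "(\<integral>\<^sup>+x. f (plane_rotation j k c s x) \<partial>gauss_vec p)
     = (\<integral>\<^sup>+y. \<integral>\<^sup>+b. \<integral>\<^sup>+a. f (plane_rotation j k c s ((y(k := b))(j := a)))
          \<partial>std_normal \<partial>std_normal \<partial>PiM ({..<p} - {j, k}) (\<lambda>_. std_normal))"
    by (rule nn_integral_gauss_vec_two_coords[OF jk])
  also have "\<dots> = (\<integral>\<^sup>+y. \<integral>\<^sup>+b. \<integral>\<^sup>+a. f ((y(k := b))(j := a))
          \<partial>std_normal \<partial>std_normal \<partial>PiM ({..<p} - {j, k}) (\<lambda>_. std_normal))"
  proof (rule nn_integral_cong)
    fix y assume y: "y \<in> space (PiM ({..<p} - {j, k}) (\<lambda>_. std_normal))"
    define F where "F a b = f ((y(k := b))(j := a))" for a b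
    have F: "(\<lambda>(a, b). F a b) \<in> borel_measurable (borel \<Otimes>\<^sub>M borel)"
      using measurable_compose[OF measurable_update_two_coords[OF jk(1,2) y] f]
      unfolding F_def by (simp add: case_prod_beta')
    have "plane_rotation j k c s ((y(k := b))(j := a)) = (y(k := - s * a + c * b))(j := c * a + s * b)"
      for a b unfolding plane_rotation_def using jk(3) by (auto simp: fun_eq_iff)
    then have "(\<integral>\<^sup>+b. \<integral>\<^sup>+a. f (plane_rotation j k c s ((y(k := b))(j := a))) \<partial>std_normal \<partial>std_normal)
       = (\<integral>\<^sup>+b. \<integral>\<^sup>+a. F (c * a + s * b) (- s * a + c * b) \<partial>std_normal \<partial>std_normal)"
      unfolding F_def by simp
    also have "\<dots> = (\<integral>\<^sup>+b. \<integral>\<^sup>+a. F a b \<partial>std_normal \<partial>std_normal)"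
      by (rule nn_integral_std_normal2_rotation[OF F cs])
    finally show "(\<integral>\<^sup>+b. \<integral>\<^sup>+a. f (plane_rotation j k c s ((y(k := b))(j := a))) \<partial>std_normal \<partial>std_normal)
       = (\<integral>\<^sup>+b. \<integral>\<^sup>+a. f ((y(k := b))(j := a)) \<partial>std_normal \<partial>std_normal)"
      unfolding F_def .
  qed
  also have "\<dots> = (\<integral>\<^sup>+x. f x \<partial>gauss_vec p)"
    by (rule nn_integral_gauss_vec_two_coords[OF jk f, symmetric])
  finally show ?thesis .
qed

lemma nn_integral_coord_reflection:
  assumes j: "j < p" and f [measurable]: "f \<in> borel_measurable (gauss_vec p)"
  shows "(\<integral>\<^sup>+x. f (coord_reflection j x) \<partial>gauss_vec p) = (\<integral>\<^sup>+x. f x \<partial>gauss_vec p)"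
proof -
  define K where "K = {..<p} - {j}"
  have K: "finite K" "j \<notin> K" and pK: "{..<p} = insert j K" unfolding K_def using j by auto
  note insert = product_sigma_finite.product_nn_integral_insert[OF product_sigma_finite_std_normal]
  have f': "f \<in> borel_measurable (PiM (insert j K) (\<lambda>_. std_normal))"
    using f pK by (simp add: gauss_vec_def)
  have fr: "(\<lambda>x. f (coord_reflection j x)) \<in> borel_measurable (PiM (insert j K) (\<lambda>_. std_normal))"
    using measurable_compose[OF coord_reflection_measurable[OF j] f] pK by (simp add: gauss_vec_def)
  have "(\<integral>\<^sup>+x. f (coord_reflection j x) \<partial>gauss_vec p)
     = (\<integral>\<^sup>+x. \<integral>\<^sup>+a. f (coord_reflection j (x(j := a))) \<partial>std_normal \<partial>PiM K (\<lambda>_. std_normal))"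
    unfolding gauss_vec_def pK by (rule insert[OF K fr])
  also have "\<dots> = (\<integral>\<^sup>+x. \<integral>\<^sup>+a. f (x(j := a)) \<partial>std_normal \<partial>PiM K (\<lambda>_. std_normal))"
  proof (rule nn_integral_cong)
    fix x assume "x \<in> space (PiM K (\<lambda>_. std_normal))"
    then have "(\<lambda>a. x(j := a)) \<in> borel \<rightarrow>\<^sub>M PiM (insert j K) (\<lambda>_. std_normal)"
      using measurable_component_update[OF _ K(2)] by simp
    then have "(\<lambda>a. f (x(j := a))) \<in> borel_measurable borel"
      using measurable_compose f' by blast
    then show "(\<integral>\<^sup>+a. f (coord_reflection j (x(j := a))) \<partial>std_normal) = (\<integral>\<^sup>+a. f (x(j := a)) \<partial>std_normal)"
      using nn_integral_std_normal_reflection[of "\<lambda>a. f (x(j := a))"]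
      by (simp add: coord_reflection_def)
  qed
  also have "\<dots> = (\<integral>\<^sup>+x. f x \<partial>gauss_vec p)"
    unfolding gauss_vec_def pK by (rule insert[OF K f', symmetric])
  finally show ?thesis .
qed

lemma distr_plane_rotation:
  "\<lbrakk>j < p; k < p; j \<noteq> k; c\<^sup>2 + s\<^sup>2 = 1\<rbrakk>
     \<Longrightarrow> distr (gauss_vec p) (gauss_vec p) (plane_rotation j k c s) = gauss_vec p"
  by (rule distr_eqI_nn_integral[OF plane_rotation_measurable]) (simp_all add: nn_integral_plane_rotation)

lemma distr_coord_reflection:
  "j < p \<Longrightarrow> distr (gauss_vec p) (gauss_vec p) (coord_reflection j) = gauss_vec p"
  by (rule distr_eqI_nn_integral[OF coord_reflection_measurable]) (simp_all add: nn_integral_coord_reflection)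

definition dot :: "nat \<Rightarrow> (nat \<Rightarrow> real) \<Rightarrow> (nat \<Rightarrow> real) \<Rightarrow> real" where
  "dot p x y = (\<Sum>k<p. x k * y k)"

definition agree :: "nat \<Rightarrow> (nat \<Rightarrow> real) \<Rightarrow> (nat \<Rightarrow> real) \<Rightarrow> bool" where
  "agree p x y \<longleftrightarrow> (\<forall>m<p. x m = y m)"

definition unit_vec :: "nat \<Rightarrow> nat \<Rightarrow> real" where
  "unit_vec i = (\<lambda>k. if k = i then 1 else 0)"

text \<open>Points of \<open>gauss_vec p\<close> are functions on all of \<open>nat\<close>; an isometry must not let the
  junk coordinates \<open>\<ge> p\<close> influence the meaningful ones.\<close>

definition gauss_isometry :: "nat \<Rightarrow> ((nat \<Rightarrow> real) \<Rightarrow> nat \<Rightarrow> real) \<Rightarrow> bool" where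
  "gauss_isometry p T \<longleftrightarrow>
     T \<in> gauss_vec p \<rightarrow>\<^sub>M gauss_vec p \<and> distr (gauss_vec p) (gauss_vec p) T = gauss_vec p \<and>
     (\<forall>x y. dot p (T x) (T y) = dot p x y) \<and> (\<forall>x y. agree p x y \<longrightarrow> agree p (T x) (T y))"

lemma agree_refl [simp]: "agree p x x"
  unfolding agree_def by simp

lemma agree_dot: "agree p x x' \<Longrightarrow> dot p x y = dot p x' y"
  unfolding agree_def dot_def by (auto intro!: sum.cong)

lemma dot_commute: "dot p x y = dot p y x"
  unfolding dot_def by (auto intro!: sum.cong simp: mult.commute)

lemma dot_unit_vec: "i < p \<Longrightarrow> dot p x (unit_vec i) = x i"
  unfolding dot_def unit_vec_def by (simp add: if_distrib cong: if_cong)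

lemma gauss_isometry_id: "gauss_isometry p (\<lambda>x. x)"
  unfolding gauss_isometry_def by (simp add: distr_id[unfolded id_def])

lemma gauss_isometry_comp:
  assumes "gauss_isometry p T1" "gauss_isometry p T2"
  shows "gauss_isometry p (\<lambda>x. T2 (T1 x))"
proof -
  have m1: "T1 \<in> gauss_vec p \<rightarrow>\<^sub>M gauss_vec p" and m2: "T2 \<in> gauss_vec p \<rightarrow>\<^sub>M gauss_vec p"
    using assms unfolding gauss_isometry_def by auto
  have "distr (gauss_vec p) (gauss_vec p) (\<lambda>x. T2 (T1 x))
      = distr (distr (gauss_vec p) (gauss_vec p) T1) (gauss_vec p) T2"
    using distr_distr[OF m2 m1] by (simp add: comp_def)
  also have "\<dots> = gauss_vec p" using assms unfolding gauss_isometry_def by simp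
  finally show ?thesis
    using assms measurable_comp[OF m1 m2] unfolding gauss_isometry_def comp_def by auto
qed

lemma sum_remove_two:
  fixes f :: "nat \<Rightarrow> real"
  assumes "j < p" "k < p" "j \<noteq> k"
  shows "(\<Sum>m<p. f m) = f j + f k + (\<Sum>m\<in>{..<p} - {j, k}. f m)"
proof -
  have "(\<Sum>m<p. f m) = f j + (f k + (\<Sum>m\<in>{..<p} - {j} - {k}. f m))"
    using assms by (simp add: sum.remove[of _ j] sum.remove[of _ k])
  then show ?thesis by (simp add: Diff_insert2[symmetric] insert_commute add.assoc)
qed

lemma gauss_isometry_plane_rotation:
  assumes jk: "j < p" "k < p" "j \<noteq> k" and cs: "c\<^sup>2 + s\<^sup>2 = 1"
  shows "gauss_isometry p (plane_rotation j k c s)"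
  unfolding gauss_isometry_def
proof (intro conjI allI impI)
  fix x y
  have "(c * x j + s * x k) * (c * y j + s * y k) + (- s * x j + c * x k) * (- s * y j + c * y k)
      = (c\<^sup>2 + s\<^sup>2) * (x j * y j + x k * y k)" by (simp add: algebra_simps power2_eq_square)
  moreover have "(\<Sum>m\<in>{..<p} - {j, k}. plane_rotation j k c s x m * plane_rotation j k c s y m)
      = (\<Sum>m\<in>{..<p} - {j, k}. x m * y m)"
    by (intro sum.cong) (auto simp: plane_rotation_def)
  ultimately show "dot p (plane_rotation j k c s x) (plane_rotation j k c s y) = dot p x y"
    unfolding dot_def sum_remove_two[OF jk, of "\<lambda>m. _ m * _ m"] using jk cs
    by (simp add: plane_rotation_def)
next
  fix x y assume "agree p x y"
  then show "agree p (plane_rotation j k c s x) (plane_rotation j k c s y)"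
    unfolding agree_def plane_rotation_def using jk by auto
qed (use plane_rotation_measurable distr_plane_rotation assms in auto)

lemma gauss_isometry_coord_reflection:
  assumes "j < p"
  shows "gauss_isometry p (coord_reflection j)"
  unfolding gauss_isometry_def
proof (intro conjI allI impI)
  show "dot p (coord_reflection j x) (coord_reflection j y) = dot p x y" for x y
    unfolding dot_def coord_reflection_def by (intro sum.cong) auto
  show "agree p (coord_reflection j x) (coord_reflection j y)" if "agree p x y" for x y
    using that assms unfolding agree_def coord_reflection_def by auto
qed (use coord_reflection_measurable distr_coord_reflection assms in auto)

lemma gauss_isometry_integral:
  fixes f :: "(nat \<Rightarrow> real) \<Rightarrow> real"
  assumes T: "gauss_isometry p T" and f: "integrable (gauss_vec p) f"
  shows "integrable (gauss_vec p) (\<lambda>x. f (T x))"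
    and "integral\<^sup>L (gauss_vec p) (\<lambda>x. f (T x)) = integral\<^sup>L (gauss_vec p) f"
proof -
  have m: "T \<in> gauss_vec p \<rightarrow>\<^sub>M gauss_vec p" and d: "distr (gauss_vec p) (gauss_vec p) T = gauss_vec p"
    using T unfolding gauss_isometry_def by auto
  have fm: "f \<in> borel_measurable (gauss_vec p)" using f by simp
  show "integrable (gauss_vec p) (\<lambda>x. f (T x))"
    and "integral\<^sup>L (gauss_vec p) (\<lambda>x. f (T x)) = integral\<^sup>L (gauss_vec p) f"
    using integrable_distr_eq[OF m fm] integral_distr[OF m fm] f d by simp_all
qed

lemma plane_rotation_unit_vec:
  "i \<noteq> j \<Longrightarrow> i \<noteq> k \<Longrightarrow> plane_rotation j k c s (unit_vec i) = unit_vec i"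
  unfolding plane_rotation_def unit_vec_def by (auto simp: fun_eq_iff)

lemma coord_reflection_unit_vec: "i \<noteq> j \<Longrightarrow> coord_reflection j (unit_vec i) = unit_vec i"
  unfolding coord_reflection_def unit_vec_def by (auto simp: fun_eq_iff)

lemma exists_plane_rotation_annihilating:
  fixes z :: "nat \<Rightarrow> real"
  assumes "j \<noteq> k"
  obtains c s where "c\<^sup>2 + s\<^sup>2 = 1" "plane_rotation j k c s z k = 0"
    "(plane_rotation j k c s z j)\<^sup>2 = (z j)\<^sup>2 + (z k)\<^sup>2"
proof (cases "(z j)\<^sup>2 + (z k)\<^sup>2 = 0")
  case True
  then have "z j = 0" "z k = 0" by (simp_all add: sum_power2_eq_zero_iff)
  then show ?thesis using that[of 1 0] assms by (simp add: plane_rotation_def)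
next
  case False
  define r where "r = sqrt ((z j)\<^sup>2 + (z k)\<^sup>2)"
  have "(z j)\<^sup>2 + (z k)\<^sup>2 > 0" using False by (simp add: add_nonneg_nonneg order_le_neq_trans)
  then have r: "r > 0" "r\<^sup>2 = (z j)\<^sup>2 + (z k)\<^sup>2" unfolding r_def by simp_all
  show ?thesis
  proof (rule that[of "z j / r" "z k / r"])
    have "(z j / r)\<^sup>2 + (z k / r)\<^sup>2 = ((z j)\<^sup>2 + (z k)\<^sup>2) / r\<^sup>2"
      by (simp add: power_divide add_divide_distrib)
    then show "(z j / r)\<^sup>2 + (z k / r)\<^sup>2 = 1" using r False by simp
    show "plane_rotation j k (z j / r) (z k / r) z k = 0"
      unfolding plane_rotation_def using r(1) by (simp add: field_simps)
    have "plane_rotation j k (z j / r) (z k / r) z j = r\<^sup>2 / r"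
      unfolding plane_rotation_def using assms r by (simp add: power2_eq_square add_divide_distrib)
    then show "(plane_rotation j k (z j / r) (z k / r) z j)\<^sup>2 = (z j)\<^sup>2 + (z k)\<^sup>2"
      using r by (simp add: power2_eq_square)
  qed
qed

text \<open>Givens reduction: one plane rotation in the coordinates \<open>(m, q')\<close> for each \<open>m < q' < q\<close>.\<close>

lemma rotate_into_coordinate:
  fixes z :: "nat \<Rightarrow> real"
  assumes "m < q" "q \<le> p" and z0: "\<forall>i<m. z i = 0"
  shows "\<exists>R. gauss_isometry p R \<and> (\<forall>i<m. agree p (R (unit_vec i)) (unit_vec i))
     \<and> (\<forall>i<q. i \<noteq> m \<longrightarrow> R z i = 0) \<and> (\<forall>i. q \<le> i \<longrightarrow> i < p \<longrightarrow> R z i = z i)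
     \<and> (R z m)\<^sup>2 = (\<Sum>i<q. (z i)\<^sup>2)"
  using assms(1,2)
proof (induction q)
  case (Suc q)
  show ?case
  proof (cases "q = m")
    case True
    then show ?thesis using z0 gauss_isometry_id
      by (intro exI[of _ "\<lambda>x. x"]) (auto simp: lessThan_Suc sum.neutral)
  next
    case False
    then have mq: "m < q" and qp: "q < p" using Suc.prems by auto
    obtain R where R: "gauss_isometry p R" "\<forall>i<m. agree p (R (unit_vec i)) (unit_vec i)"
      "\<forall>i<q. i \<noteq> m \<longrightarrow> R z i = 0" "\<forall>i. q \<le> i \<longrightarrow> i < p \<longrightarrow> R z i = z i"
      "(R z m)\<^sup>2 = (\<Sum>i<q. (z i)\<^sup>2)"
      using Suc.IH mq qp by auto
    obtain c s where cs: "c\<^sup>2 + s\<^sup>2 = 1" "plane_rotation m q c s (R z) q = 0"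
      "(plane_rotation m q c s (R z) m)\<^sup>2 = (R z m)\<^sup>2 + (R z q)\<^sup>2"
      using exists_plane_rotation_annihilating[of m q "R z"] mq by auto
    have rot: "gauss_isometry p (plane_rotation m q c s)"
      using gauss_isometry_plane_rotation mq qp cs(1) by simp
    show ?thesis
    proof (intro exI[of _ "\<lambda>x. plane_rotation m q c s (R x)"] conjI allI impI)
      show "gauss_isometry p (\<lambda>x. plane_rotation m q c s (R x))"
        by (rule gauss_isometry_comp[OF R(1) rot])
      fix i
      show "agree p (plane_rotation m q c s (R (unit_vec i))) (unit_vec i)" if "i < m"
        using rot R(2) that mq plane_rotation_unit_vec[of i m q c s]
        unfolding gauss_isometry_def by (metis less_not_refl order.strict_trans)
      show "plane_rotation m q c s (R z) i = 0" if "i < Suc q" "i \<noteq> m"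
        using that R(3) cs(2) by (auto simp: less_Suc_eq plane_rotation_def)
      show "plane_rotation m q c s (R z) i = z i" if "Suc q \<le> i" "i < p"
        using that R(4) mq by (simp add: plane_rotation_def)
    qed (use cs(3) R(4,5) qp in simp)
  qed
qed simp

lemma exists_gauss_isometry_to_unit_vec:
  fixes z :: "nat \<Rightarrow> real"
  assumes "m < p" and z0: "\<forall>i<m. z i = 0" and z1: "(\<Sum>i<p. (z i)\<^sup>2) = 1"
  shows "\<exists>R. gauss_isometry p R \<and> (\<forall>i<m. agree p (R (unit_vec i)) (unit_vec i))
     \<and> agree p (R z) (unit_vec m)"
proof -
  obtain R where R: "gauss_isometry p R" "\<forall>i<m. agree p (R (unit_vec i)) (unit_vec i)"
      "\<forall>i<p. i \<noteq> m \<longrightarrow> R z i = 0" "(R z m)\<^sup>2 = 1"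
    using rotate_into_coordinate[OF assms(1) order.refl z0] z1 by auto
  consider "R z m = 1" | "R z m = -1" using R(4) by (auto simp: power2_eq_1_iff)
  then show ?thesis
  proof cases
    case 1
    then show ?thesis using R unfolding agree_def unit_vec_def by auto
  next
    case 2
    have refl: "gauss_isometry p (coord_reflection m)" by (rule gauss_isometry_coord_reflection[OF assms(1)])
    show ?thesis
    proof (intro exI[of _ "\<lambda>x. coord_reflection m (R x)"] conjI allI impI)
      show "gauss_isometry p (\<lambda>x. coord_reflection m (R x))" by (rule gauss_isometry_comp[OF R(1) refl])
      show "agree p (coord_reflection m (R (unit_vec i))) (unit_vec i)" if "i < m" for i
        using refl R(2) that coord_reflection_unit_vec[of i m] unfolding gauss_isometry_def
        by (metis less_irrefl)
      show "agree p (coord_reflection m (R z)) (unit_vec m)"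
        using R(3) 2 unfolding agree_def unit_vec_def coord_reflection_def by auto
    qed
  qed
qed

lemma exists_gauss_isometry_orthonormal_to_basis:
  fixes u :: "nat \<Rightarrow> nat \<Rightarrow> real"
  assumes "h \<le> p" and "\<forall>i<h. \<forall>j<h. dot p (u i) (u j) = (if i = j then 1 else 0)"
  shows "\<exists>T. gauss_isometry p T \<and> (\<forall>i<h. agree p (T (u i)) (unit_vec i))"
  using assms
proof (induction h)
  case 0
  then show ?case using gauss_isometry_id by auto
next
  case (Suc h)
  obtain T where T: "gauss_isometry p T" "\<forall>i<h. agree p (T (u i)) (unit_vec i)"
    using Suc by auto
  then have Tdot: "dot p (T x) (T y) = dot p x y" for x y unfolding gauss_isometry_def by blast
  have hp: "h < p" using Suc.prems by simp
  have "T (u h) i = 0" if "i < h" for i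
  proof -
    have "T (u h) i = dot p (T (u i)) (T (u h))"
      using dot_unit_vec agree_dot T(2) that hp dot_commute by (metis order.strict_trans)
    also have "\<dots> = 0" using Tdot Suc.prems(2) that by auto
    finally show ?thesis .
  qed
  moreover have "(\<Sum>i<p. (T (u h) i)\<^sup>2) = 1"
    using Tdot[of "u h" "u h"] Suc.prems(2) by (simp add: dot_def power2_eq_square)
  ultimately obtain R where R: "gauss_isometry p R" "\<forall>i<h. agree p (R (unit_vec i)) (unit_vec i)"
      "agree p (R (T (u h))) (unit_vec h)"
    using exists_gauss_isometry_to_unit_vec[OF hp] by blast
  have "agree p (R (T (u i))) (unit_vec i)" if "i < Suc h" for i
  proof (cases "i = h")
    case False
    then have "agree p (R (T (u i))) (R (unit_vec i))"
      using R(1) T(2) that unfolding gauss_isometry_def by auto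
    then show ?thesis using R(2) that False unfolding agree_def by auto
  qed (use R(3) in simp)
  then show ?case using gauss_isometry_comp[OF T(1) R(1)] by blast
qed

section \<open>Gaussian moments of monomials\<close>

lemma gauss_vec_prod:
  assumes "\<And>m. m < p \<Longrightarrow> integrable std_normal (f m)"
  shows "integrable (gauss_vec p) (\<lambda>y. \<Prod>m<p. f m (y m))"
    and "integral\<^sup>L (gauss_vec p) (\<lambda>y. \<Prod>m<p. f m (y m)) = (\<Prod>m<p. Eg (f m))"
  using assms product_sigma_finite.product_integrable_prod[OF product_sigma_finite_std_normal, of "{..<p}" f]
    product_sigma_finite.product_integral_prod[OF product_sigma_finite_std_normal, of "{..<p}" f]
  by (simp_all add: gauss_vec_def Eg_def)

definition moment :: "(real \<Rightarrow> real) \<Rightarrow> nat \<Rightarrow> nat \<Rightarrow> real" where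
  "moment f a b = Eg (\<lambda>t. f t ^ a * t ^ b)"

definition gauss_monomial ::
    "(nat \<Rightarrow> real \<Rightarrow> real) \<Rightarrow> nat \<Rightarrow> nat multiset \<Rightarrow> nat multiset \<Rightarrow> (nat \<Rightarrow> real) \<Rightarrow> real" where
  "gauss_monomial H p A B y = (\<Prod>m<p. H m (y m) ^ count A m * y m ^ count B m)"

lemma gauss_monomial_mult:
  "gauss_monomial H p A B y * gauss_monomial H p A' B' y = gauss_monomial H p (A + A') (B + B') y"
  unfolding gauss_monomial_def prod.distrib[symmetric] by (intro prod.cong) (simp_all add: power_add)

lemma gauss_monomial_single:
  assumes "i < p" "k < p"
  shows "gauss_monomial H p {#i#} {#k#} y = H i (y i) * y k"
  using assms
  by (simp add: gauss_monomial_def count_single prod.distrib if_distrib[of "\<lambda>n. _ ^ n"] prod.If_cases)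

definition low_moments_integrable :: "nat \<Rightarrow> (nat \<Rightarrow> real \<Rightarrow> real) \<Rightarrow> bool" where
  "low_moments_integrable h H \<longleftrightarrow>
     (\<forall>m<h. \<forall>a\<le>2. \<forall>b\<le>2. integrable std_normal (\<lambda>t. H m t ^ a * t ^ b))"

lemma gauss_monomial_integral:
  assumes H: "low_moments_integrable h H"
    and A: "set_mset A \<subseteq> {..<h}" "size A \<le> 2" and B: "size B \<le> 2"
  shows "integrable (gauss_vec p) (gauss_monomial H p A B)"
    and "integral\<^sup>L (gauss_vec p) (gauss_monomial H p A B) = (\<Prod>m<p. moment (H m) (count A m) (count B m))"
proof -
  have "integrable std_normal (\<lambda>t. H m t ^ count A m * t ^ count B m)" for m
  proof (cases "count A m = 0")
    case True
    then show ?thesis using integrable_std_normal_power by simp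
  next
    case False
    then have "m < h" using A(1) by (auto simp: count_eq_zero_iff)
    then show ?thesis
      using H A(2) B count_le_size[of A m] count_le_size[of B m] unfolding low_moments_integrable_def by auto
  qed
  then show "integrable (gauss_vec p) (gauss_monomial H p A B)"
    and "integral\<^sup>L (gauss_vec p) (gauss_monomial H p A B) = (\<Prod>m<p. moment (H m) (count A m) (count B m))"
    using gauss_vec_prod[of p "\<lambda>m t. H m t ^ count A m * t ^ count B m"]
    unfolding gauss_monomial_def[abs_def] moment_def by simp_all
qed

lemma moment_0_0: "moment f 0 0 = 1"
  unfolding moment_def using Eg_const[of 1] by simp

lemma moment_0_1: "moment f 0 1 = 0"
  unfolding moment_def using Eg_ident by simp

lemma moment_0_2: "moment f 0 2 = 1"
  unfolding moment_def using Eg_square by simp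

lemmas moment_0_Suc = moment_0_1[unfolded One_nat_def] moment_0_2[unfolded numeral_2_eq_2]

lemma count_pair: "count {#i, j#} m = (if m = i then 1 else 0) + (if m = j then 1 else 0)"
  by (simp add: count_single)

lemma prod_lessThan_support:
  fixes f :: "nat \<Rightarrow> real"
  assumes "S \<subseteq> {..<p}" "\<And>m. m < p \<Longrightarrow> m \<notin> S \<Longrightarrow> f m = 1"
  shows "(\<Prod>m<p. f m) = prod f S"
  using assms by (intro prod.mono_neutral_right) auto

lemma prod_moments_single:
  fixes i k p :: nat
  assumes "i < p" "k < p"
  shows "(\<Prod>m<p. moment (f m) (count {#i#} m) (count {#k#} m)) = (if k = i then moment (f i) 1 1 else 0)"
proof (cases "k = i")
  case True
  let ?f = "\<lambda>m. moment (f m) (count {#i#} m) (count {#k#} m)"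
  have "(\<Prod>m<p. ?f m) = prod ?f {i}"
    by (rule prod_lessThan_support) (use assms True in \<open>auto simp: count_single moment_0_0\<close>)
  then show ?thesis using True by (simp add: count_single)
next
  case False
  then have "moment (f k) (count {#i#} k) (count {#k#} k) = 0" by (simp add: count_single moment_0_Suc)
  then show ?thesis using False assms by (auto intro: prod_zero)
qed

definition quartic_moment ::
    "(nat \<Rightarrow> nat \<Rightarrow> real) \<Rightarrow> (nat \<Rightarrow> real) \<Rightarrow> (nat \<Rightarrow> real) \<Rightarrow> (nat \<Rightarrow> real) \<Rightarrow> nat \<Rightarrow> nat \<Rightarrow> nat \<Rightarrow> nat \<Rightarrow> real" where
  "quartic_moment g D V b i j k l =
     (if k = l then g i k * g j k + (if i = j then (if k = i then D i else V i) else 0) else 0)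
     + (if i \<noteq> j \<and> k = j \<and> l = i then b i * b j else 0)
     + (if k = i \<and> l = j then b i * b j else 0)"

text \<open>\<open>pair_moment H i j k l\<close> is \<open>E[H\<^sub>i(y\<^sub>i) H\<^sub>j(y\<^sub>j) y\<^sub>k y\<^sub>l]\<close> for \<open>y \<sim> N(0, I)\<close>, grouped so that the
  variance of a feature sum splits into nonnegative pieces.\<close>

definition pair_moment :: "(nat \<Rightarrow> real \<Rightarrow> real) \<Rightarrow> nat \<Rightarrow> nat \<Rightarrow> nat \<Rightarrow> nat \<Rightarrow> real" where
  "pair_moment f = quartic_moment
      (\<lambda>i k. if k = i then moment (f i) 1 2 else moment (f i) 1 0)
      (\<lambda>i. moment (f i) 2 2 - (moment (f i) 1 1)\<^sup>2 - (moment (f i) 1 2)\<^sup>2)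
      (\<lambda>i. moment (f i) 2 0 - (moment (f i) 1 0)\<^sup>2) (\<lambda>i. moment (f i) 1 1)"

lemma prod_moments_pair:
  fixes i j k l p :: nat
  assumes i: "i < p" and j: "j < p" and k: "k < p" and l: "l < p"
  shows "(\<Prod>m<p. moment (f m) (count {#i, j#} m) (count {#k, l#} m)) = pair_moment f i j k l"
proof -
  let ?f = "\<lambda>m. moment (f m) (count {#i, j#} m) (count {#k, l#} m)"
  have "(\<Prod>m<p. ?f m) = prod ?f {i, j, k, l}"
    by (rule prod_lessThan_support) (use assms in \<open>auto simp: count_pair moment_0_0\<close>)
  then show ?thesis
    by (cases "i = j"; cases "k = l"; cases "k = i"; cases "k = j"; cases "l = i"; cases "l = j")
       (simp_all add: count_pair pair_moment_def quartic_moment_def moment_0_0 moment_0_Suc numeral_2_eq_2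
         power2_eq_square insert_commute mult_ac)
qed

section \<open>A lower bound for the variance quadratic form\<close>

text \<open>The smaller eigenvalue of the symmetric matrix \<open>[[x, z], [z, y]]\<close>.\<close>

definition min_eigenvalue2 :: "real \<Rightarrow> real \<Rightarrow> real \<Rightarrow> real" where
  "min_eigenvalue2 x y z = (x + y - sqrt ((x - y)\<^sup>2 + 4 * z\<^sup>2)) / 2"

lemma min_eigenvalue2_le_quadratic_form:
  "min_eigenvalue2 x y z * (u\<^sup>2 + v\<^sup>2) \<le> x * u\<^sup>2 + y * v\<^sup>2 + 2 * z * u * v"
proof -
  define S where "S = sqrt ((x - y)\<^sup>2 + 4 * z\<^sup>2)"
  have S: "S \<ge> \<bar>x - y\<bar>" "S\<^sup>2 = (x - y)\<^sup>2 + 4 * z\<^sup>2"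
    unfolding S_def by (auto intro: real_le_rsqrt simp: power2_abs add_nonneg_nonneg)
  define P where "P = x - min_eigenvalue2 x y z"
  define Q where "Q = y - min_eigenvalue2 x y z"
  have P: "P = (x - y + S) / 2" and Q: "Q = (y - x + S) / 2"
    unfolding P_def Q_def min_eigenvalue2_def S_def by (simp_all add: field_simps)
  then have "P \<ge> 0" "Q \<ge> 0" using S(1) by (simp_all add: abs_le_iff)
  have PQ: "P * Q = z\<^sup>2"
  proof -
    have "P * Q = (S\<^sup>2 - (x - y)\<^sup>2) / 4" unfolding P Q by (simp add: field_simps power2_eq_square)
    then show ?thesis using S(2) by simp
  qed
  have "P * u\<^sup>2 + Q * v\<^sup>2 + 2 * z * u * v \<ge> 0"
  proof (cases "P = 0")
    case True
    then show ?thesis using PQ \<open>Q \<ge> 0\<close> by simp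
  next
    case False
    have "P * (P * u\<^sup>2 + Q * v\<^sup>2 + 2 * z * u * v) = (P * u + z * v)\<^sup>2 + (P * Q - z\<^sup>2) * v\<^sup>2"
      by (simp add: algebra_simps power2_eq_square)
    also have "\<dots> \<ge> 0" using PQ by simp
    finally show ?thesis using False \<open>P \<ge> 0\<close> by (simp add: zero_le_mult_iff)
  qed
  then show ?thesis unfolding P_def Q_def by (simp add: algebra_simps)
qed

lemma min_eigenvalue2_diag: "min_eigenvalue2 x x (b * b) = x - b\<^sup>2"
proof -
  have "(x - x)\<^sup>2 + 4 * (b * b)\<^sup>2 = (2 * b\<^sup>2)\<^sup>2" by (simp add: power2_eq_square)
  then have "sqrt ((x - x)\<^sup>2 + 4 * (b * b)\<^sup>2) = 2 * b\<^sup>2"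
    using real_sqrt_abs[of "2 * b\<^sup>2"] by (simp only:) simp
  then show ?thesis unfolding min_eigenvalue2_def by simp
qed

lemma min_eigenvalue2_nonneg:
  assumes "0 \<le> x" "0 \<le> y" "z\<^sup>2 \<le> x * y"
  shows "0 \<le> min_eigenvalue2 x y z"
proof -
  have "(x - y)\<^sup>2 + 4 * z\<^sup>2 \<le> (x + y)\<^sup>2" using assms(3) by (simp add: power2_eq_square algebra_simps)
  then have "sqrt ((x - y)\<^sup>2 + 4 * z\<^sup>2) \<le> x + y"
    using real_sqrt_le_mono[of _ "(x + y)\<^sup>2"] assms(1,2) by fastforce
  then show ?thesis unfolding min_eigenvalue2_def by simp
qed

lemma sum_quartic_moment_right:
  assumes "i < p" "j < p" "k < p"
  shows "(\<Sum>l<p. c i k * c j l * quartic_moment g D V b i j k l)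
    = c i k * c j k * (g i k * g j k + (if i = j then (if k = i then D i else V i) else 0))
      + (if i \<noteq> j \<and> k = j then c i k * c j i * (b i * b j) else 0)
      + (if k = i then c i k * c j j * (b i * b j) else 0)"
proof -
  have "(\<Sum>l<p. c i k * c j l * quartic_moment g D V b i j k l)
     = (\<Sum>l<p. if l = k then c i k * c j l * (g i k * g j k + (if i = j then (if k = i then D i else V i) else 0)) else 0)
     + (\<Sum>l<p. if l = i then (if i \<noteq> j \<and> k = j then c i k * c j l * (b i * b j) else 0) else 0)
     + (\<Sum>l<p. if l = j then (if k = i then c i k * c j l * (b i * b j) else 0) else 0)"
    unfolding quartic_moment_def sum.distrib[symmetric] by (intro sum.cong) (auto simp: algebra_simps)
  then show ?thesis using assms by (simp only: sum.delta finite_lessThan lessThan_iff if_True)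
qed

lemma sum_sum_delta_diag:
  fixes f :: "nat \<Rightarrow> nat \<Rightarrow> real"
  assumes "h \<le> p"
  shows "(\<Sum>i<h. \<Sum>k<p. if k = i then f i k else 0) = (\<Sum>i<h. f i i)"
  using assms by (intro sum.cong refl) (simp add: sum.delta)

lemma quartic_form_decomposition:
  assumes hp: "h \<le> p"
  shows "(\<Sum>i<h. \<Sum>k<p. \<Sum>j<h. \<Sum>l<p. c i k * c j l * quartic_moment g D V b i j k l)
       - (\<Sum>i<h. \<Sum>k<p. c i k * (if k = i then b i else 0))\<^sup>2
     = (\<Sum>k<p. (\<Sum>i<h. c i k * g i k)\<^sup>2)
       + (\<Sum>i<h. \<Sum>k<p. (c i k)\<^sup>2 * (if k = i then D i else V i))
       + (\<Sum>i<h. \<Sum>j<h. if i \<noteq> j then c i j * c j i * (b i * b j) else 0)"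
proof -
  have "(\<Sum>i<h. \<Sum>k<p. \<Sum>j<h. \<Sum>l<p. c i k * c j l * quartic_moment g D V b i j k l)
     = (\<Sum>i<h. \<Sum>k<p. \<Sum>j<h. c i k * c j k * (g i k * g j k))
     + (\<Sum>i<h. \<Sum>k<p. \<Sum>j<h. c i k * c j k * (if i = j then (if k = i then D i else V i) else 0))
     + (\<Sum>i<h. \<Sum>k<p. \<Sum>j<h. if i \<noteq> j \<and> k = j then c i k * c j i * (b i * b j) else 0)
     + (\<Sum>i<h. \<Sum>k<p. \<Sum>j<h. if k = i then c i k * c j j * (b i * b j) else 0)"
    unfolding sum.distrib[symmetric]
    by (intro sum.cong refl, subst sum_quartic_moment_right) (use hp in \<open>auto simp: algebra_simps\<close>)
  moreover have "(\<Sum>i<h. \<Sum>k<p. \<Sum>j<h. c i k * c j k * (g i k * g j k)) = (\<Sum>k<p. (\<Sum>i<h. c i k * g i k)\<^sup>2)"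
    by (subst sum.swap) (simp add: power2_eq_square sum_product algebra_simps)
  moreover have "(\<Sum>j<h. c i k * c j k * (if i = j then (if k = i then D i else V i) else 0))
      = (c i k)\<^sup>2 * (if k = i then D i else V i)" if "i < h" for i k
    using that by (simp add: if_distrib[of "\<lambda>x. _ * x"] power2_eq_square sum.delta cong: if_cong)
  moreover have "(\<Sum>k<p. \<Sum>j<h. if i \<noteq> j \<and> k = j then c i k * c j i * (b i * b j) else 0)
      = (\<Sum>j<h. if i \<noteq> j then c i j * c j i * (b i * b j) else 0)" for i
    using hp by (subst sum.swap) (intro sum.cong refl, auto simp: sum.delta if_distrib cong: if_cong)
  moreover have "(\<Sum>i<h. \<Sum>k<p. \<Sum>j<h. if k = i then c i k * c j j * (b i * b j) else 0)
      = (\<Sum>i<h. \<Sum>k<p. c i k * (if k = i then b i else 0))\<^sup>2"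
  proof -
    have "(\<Sum>i<h. \<Sum>k<p. \<Sum>j<h. if k = i then c i k * c j j * (b i * b j) else 0)
        = (\<Sum>i<h. \<Sum>j<h. c i i * c j j * (b i * b j))"
      unfolding sum_sum_delta_diag[OF hp, of "\<lambda>i k. \<Sum>j<h. c i k * c j j * (b i * b j)", symmetric]
      by (intro sum.cong refl) auto
    also have "\<dots> = (\<Sum>i<h. c i i * b i)\<^sup>2"
      by (simp add: power2_eq_square sum_product algebra_simps)
    also have "(\<Sum>i<h. c i i * b i) = (\<Sum>i<h. \<Sum>k<p. c i k * (if k = i then b i else 0))"
      using sum_sum_delta_diag[OF hp, of "\<lambda>i k. c i k * b i"] by (simp add: if_distrib cong: if_cong)
    finally show ?thesis .
  qed
  ultimately show ?thesis by simp
qed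

lemma sum_sum_ge_of_symmetric_pairs:
  fixes T f :: "nat \<Rightarrow> nat \<Rightarrow> real"
  assumes "\<And>i j. i < h \<Longrightarrow> j < h \<Longrightarrow> z * (f i j + f j i) \<le> T i j + T j i"
  shows "z * (\<Sum>i<h. \<Sum>j<h. f i j) \<le> (\<Sum>i<h. \<Sum>j<h. T i j)"
proof -
  have "(\<Sum>i<h. \<Sum>j<h. z * (f i j + f j i))
      = z * (\<Sum>i<h. \<Sum>j<h. f i j) + z * (\<Sum>i<h. \<Sum>j<h. f j i)"
    by (simp add: sum.distrib sum_distrib_left distrib_left)
  also have "(\<Sum>i<h. \<Sum>j<h. f j i) = (\<Sum>i<h. \<Sum>j<h. f i j)" by (rule sum.swap)
  finally have "2 * (z * (\<Sum>i<h. \<Sum>j<h. f i j)) = (\<Sum>i<h. \<Sum>j<h. z * (f i j + f j i))"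
    by simp
  also have "\<dots> \<le> (\<Sum>i<h. \<Sum>j<h. T i j + T j i)" by (intro sum_mono assms) auto
  also have "\<dots> = 2 * (\<Sum>i<h. \<Sum>j<h. T i j)"
    using sum.swap[of "\<lambda>i j. T j i" "{..<h}" "{..<h}"] by (simp add: sum.distrib)
  finally show ?thesis by simp
qed

lemma sum_lessThan_split:
  fixes f :: "nat \<Rightarrow> real"
  assumes "h \<le> p"
  shows "(\<Sum>k<p. f k) = (\<Sum>k<h. f k) + (\<Sum>k\<in>{h..<p}. f k)"
proof -
  have "{..<p} = {..<h} \<union> {h..<p}" using assms by auto
  then show ?thesis by (simp add: sum.union_disjoint ivl_disj_int)
qed

lemma quartic_form_decomposition_ge:
  fixes h p :: nat
  assumes hp: "h \<le> p"
    and D: "\<And>i. i < h \<Longrightarrow> \<theta>2 \<le> D i"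
    and V: "\<And>i j. i < h \<Longrightarrow> j < h \<Longrightarrow> \<theta>1 \<le> min_eigenvalue2 (V i) (V j) (b i * b j)"
  shows "min \<theta>1 \<theta>2 * (\<Sum>i<h. \<Sum>k<p. (c i k)\<^sup>2)
     \<le> (\<Sum>k<p. (\<Sum>i<h. c i k * g i k)\<^sup>2)
       + (\<Sum>i<h. \<Sum>k<p. (c i k)\<^sup>2 * (if k = i then D i else V i))
       + (\<Sum>i<h. \<Sum>j<h. if i \<noteq> j then c i j * c j i * (b i * b j) else 0)"
proof -
  define z where "z = min \<theta>1 \<theta>2"
  have zV: "z \<le> V i" if "i < h" for i
    using V[OF that that] min_eigenvalue2_diag[of "V i" "b i"] unfolding z_def
    by (smt (verit) zero_le_power2)
  define T where "T i j = (c i j)\<^sup>2 * (if j = i then D i else V i)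
    + (if i \<noteq> j then c i j * c j i * (b i * b j) else 0)" for i j
  have "z * ((c i j)\<^sup>2 + (c j i)\<^sup>2) \<le> T i j + T j i" if "i < h" "j < h" for i j
  proof (cases "i = j")
    case True
    then show ?thesis using D[OF that(1)] unfolding T_def z_def
      by (simp add: mult_right_mono algebra_simps)
  next
    case False
    have "z * ((c i j)\<^sup>2 + (c j i)\<^sup>2) \<le> min_eigenvalue2 (V i) (V j) (b i * b j) * ((c i j)\<^sup>2 + (c j i)\<^sup>2)"
      using V[OF that] unfolding z_def by (intro mult_right_mono) auto
    also have "\<dots> \<le> V i * (c i j)\<^sup>2 + V j * (c j i)\<^sup>2 + 2 * (b i * b j) * c i j * c j i"
      by (rule min_eigenvalue2_le_quadratic_form)
    finally show ?thesis unfolding T_def using False by (simp add: algebra_simps)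
  qed
  then have square: "z * (\<Sum>i<h. \<Sum>k<h. (c i k)\<^sup>2) \<le> (\<Sum>i<h. \<Sum>j<h. T i j)"
    by (rule sum_sum_ge_of_symmetric_pairs)
  have rest: "z * (\<Sum>i<h. \<Sum>k\<in>{h..<p}. (c i k)\<^sup>2)
      \<le> (\<Sum>i<h. \<Sum>k\<in>{h..<p}. (c i k)\<^sup>2 * (if k = i then D i else V i))"
    unfolding sum_distrib_left using zV by (intro sum_mono) (auto simp: mult.commute mult_right_mono)
  have "(\<Sum>k<p. (\<Sum>i<h. c i k * g i k)\<^sup>2) \<ge> 0" by (intro sum_nonneg) auto
  with square rest show ?thesis
    unfolding z_def[symmetric] T_def sum_lessThan_split[OF hp]
    by (simp add: sum.distrib distrib_left)
qed

section \<open>Variance of Gaussian feature sums\<close>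

lemma integral_double_sum:
  fixes f :: "'i \<Rightarrow> 'j \<Rightarrow> 'a \<Rightarrow> real"
  assumes "\<And>i k. i \<in> A \<Longrightarrow> k \<in> B \<Longrightarrow> integrable M (f i k)"
  shows "integrable M (\<lambda>x. \<Sum>i\<in>A. \<Sum>k\<in>B. f i k x)"
    and "integral\<^sup>L M (\<lambda>x. \<Sum>i\<in>A. \<Sum>k\<in>B. f i k x) = (\<Sum>i\<in>A. \<Sum>k\<in>B. integral\<^sup>L M (f i k))"
  using assms by (auto intro!: Bochner_Integration.integrable_sum
      simp: Bochner_Integration.integral_sum[where I = A] Bochner_Integration.integral_sum[where I = B])

definition gauss_feature_sum ::
    "(nat \<Rightarrow> real \<Rightarrow> real) \<Rightarrow> (nat \<Rightarrow> nat \<Rightarrow> real) \<Rightarrow> nat \<Rightarrow> nat \<Rightarrow> (nat \<Rightarrow> real) \<Rightarrow> real" where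
  "gauss_feature_sum H c h p y = (\<Sum>i<h. \<Sum>k<p. c i k * (H i (y i) * y k))"

context
  fixes H :: "nat \<Rightarrow> real \<Rightarrow> real" and h p :: nat
  assumes hp: "h \<le> p" and low_moments: "low_moments_integrable h H"
begin

lemma gauss_feature_sum_monomials:
  "gauss_feature_sum H c h p y = (\<Sum>i<h. \<Sum>k<p. c i k * gauss_monomial H p {#i#} {#k#} y)"
  unfolding gauss_feature_sum_def using hp by (intro sum.cong refl) (simp add: gauss_monomial_single)

lemma gauss_feature_sum_square_monomials:
  "(gauss_feature_sum H c h p y)\<^sup>2
     = (\<Sum>i<h. \<Sum>k<p. \<Sum>j<h. \<Sum>l<p. c i k * c j l * gauss_monomial H p {#i, j#} {#k, l#} y)"
proof -
  have "(gauss_feature_sum H c h p y)\<^sup>2 = (\<Sum>i<h. \<Sum>k<p. \<Sum>j<h. \<Sum>l<p.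
      (c i k * gauss_monomial H p {#i#} {#k#} y) * (c j l * gauss_monomial H p {#j#} {#l#} y))"
    unfolding gauss_feature_sum_monomials power2_eq_square sum_product
    by (rule sum.cong[OF refl], rule sum.swap)
  then show ?thesis by (simp add: gauss_monomial_mult mult_ac add_mset_commute)
qed

lemma integrable_gauss_monomial_pair:
  "i < h \<Longrightarrow> j < h \<Longrightarrow> integrable (gauss_vec p) (gauss_monomial H p {#i, j#} {#k, l#})"
  by (rule gauss_monomial_integral(1)[OF low_moments]) auto

lemma integrable_gauss_monomial_single:
  "i < h \<Longrightarrow> integrable (gauss_vec p) (gauss_monomial H p {#i#} {#k#})"
  by (rule gauss_monomial_integral(1)[OF low_moments]) auto

lemma integral_gauss_feature_sum:
  "integrable (gauss_vec p) (gauss_feature_sum H c h p)"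
  "integral\<^sup>L (gauss_vec p) (gauss_feature_sum H c h p)
     = (\<Sum>i<h. \<Sum>k<p. c i k * (if k = i then moment (H i) 1 1 else 0))"
proof -
  have "integral\<^sup>L (gauss_vec p) (gauss_monomial H p {#i#} {#k#}) = (if k = i then moment (H i) 1 1 else 0)"
    if "i < h" "k < p" for i k
    using gauss_monomial_integral(2)[OF low_moments, where A = "{#i#}" and B = "{#k#}"] prod_moments_single[of i p k] that hp
    by simp
  then show "integrable (gauss_vec p) (gauss_feature_sum H c h p)"
    "integral\<^sup>L (gauss_vec p) (gauss_feature_sum H c h p)
     = (\<Sum>i<h. \<Sum>k<p. c i k * (if k = i then moment (H i) 1 1 else 0))"
    unfolding gauss_feature_sum_monomials[abs_def]
    using integral_double_sum[where M = "gauss_vec p" and A = "{..<h}" and B = "{..<p}"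
        and f = "\<lambda>i k y. c i k * gauss_monomial H p {#i#} {#k#} y"]
    by (simp_all add: integrable_gauss_monomial_single)
qed

lemma integral_gauss_feature_sum_square:
  "integrable (gauss_vec p) (\<lambda>y. (gauss_feature_sum H c h p y)\<^sup>2)"
  "integral\<^sup>L (gauss_vec p) (\<lambda>y. (gauss_feature_sum H c h p y)\<^sup>2)
     = (\<Sum>i<h. \<Sum>k<p. \<Sum>j<h. \<Sum>l<p. c i k * c j l * pair_moment H i j k l)"
proof -
  have "integral\<^sup>L (gauss_vec p) (gauss_monomial H p {#i, j#} {#k, l#}) = pair_moment H i j k l"
    if "i < h" "j < h" "k < p" "l < p" for i j k l
    using gauss_monomial_integral(2)[OF low_moments, where A = "{#i, j#}" and B = "{#k, l#}"] prod_moments_pair[of i p j k l] that hp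
    by simp
  then show "integrable (gauss_vec p) (\<lambda>y. (gauss_feature_sum H c h p y)\<^sup>2)"
    "integral\<^sup>L (gauss_vec p) (\<lambda>y. (gauss_feature_sum H c h p y)\<^sup>2)
     = (\<Sum>i<h. \<Sum>k<p. \<Sum>j<h. \<Sum>l<p. c i k * c j l * pair_moment H i j k l)"
    unfolding gauss_feature_sum_square_monomials
    using integral_double_sum[where M = "gauss_vec p" and A = "{..<h}" and B = "{..<p}"
        and f = "\<lambda>i k y. \<Sum>j<h. \<Sum>l<p. c i k * c j l * gauss_monomial H p {#i, j#} {#k, l#} y"]
      integral_double_sum[where M = "gauss_vec p" and A = "{..<h}" and B = "{..<p}"
        and f = "\<lambda>j l y. c i k * c j l * gauss_monomial H p {#i, j#} {#k, l#} y" for i k]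
    by (simp_all add: integrable_gauss_monomial_pair)
qed

end

text \<open>Bessel's inequality for the orthonormal pair \<open>1, g\<close> in \<open>L\<^sup>2(\<gamma>)\<close>.\<close>

lemma Eg_mult_square_le_Varg:
  fixes \<xi> :: "real \<Rightarrow> real"
  assumes int: "integrable std_normal \<xi>" "integrable std_normal (\<lambda>g. g * \<xi> g)"
    "integrable std_normal (\<lambda>g. (\<xi> g)\<^sup>2)"
  shows "(Eg (\<lambda>g. g * \<xi> g))\<^sup>2 \<le> Varg \<xi>"
proof -
  define e where "e = Eg \<xi>"
  define b where "b = Eg (\<lambda>g. g * \<xi> g)"
  have const: "has_bochner_integral std_normal (\<lambda>_. c) c" for c :: real
    using has_bochner_integral_integrable[OF integrable_std_normal_const[of c]]
    unfolding Eg_const[of c, unfolded Eg_def] .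
  have sq: "(\<lambda>g. (\<xi> g - e - b * g)\<^sup>2) = (\<lambda>g. ((\<xi> g)\<^sup>2 + (- 2 * e) * \<xi> g)
      + ((- 2 * b) * (g * \<xi> g) + e\<^sup>2) + ((2 * e * b) * g + b\<^sup>2 * g\<^sup>2))"
    by (simp add: fun_eq_iff power2_eq_square algebra_simps)
  have "Eg (\<lambda>g. (\<xi> g - e - b * g)\<^sup>2) = (Eg (\<lambda>g. (\<xi> g)\<^sup>2) + (- 2 * e) * Eg \<xi>)
      + ((- 2 * b) * Eg (\<lambda>g. g * \<xi> g) + e\<^sup>2) + ((2 * e * b) * Eg (\<lambda>g. g) + b\<^sup>2 * Eg (\<lambda>g. g\<^sup>2))"
    unfolding sq Eg_def
    by (rule has_bochner_integral_integral_eq)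
       (intro has_bochner_integral_add has_bochner_integral_mult_right const has_bochner_integral_integrable
          int integrable_std_normal_power[of 1, simplified] integrable_std_normal_power[of 2])
  moreover have "0 \<le> Eg (\<lambda>g. (\<xi> g - e - b * g)\<^sup>2)" unfolding Eg_def by (rule integral_nonneg_AE) auto
  ultimately show ?thesis
    unfolding Varg_def e_def[symmetric] b_def[symmetric] Eg_ident Eg_square
    by (simp add: power2_eq_square)
qed

lemma variance_gauss_feature_sum_ge:
  fixes H :: "nat \<Rightarrow> real \<Rightarrow> real" and c :: "nat \<Rightarrow> nat \<Rightarrow> real"
  assumes hp: "h \<le> p"
    and H: "low_moments_integrable h H"
    and D: "\<And>i. i < h \<Longrightarrow> \<theta>2 \<le> Varg (\<lambda>g. g * H i g) - (Eg (\<lambda>g. g\<^sup>2 * H i g))\<^sup>2"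
    and V: "\<And>i j. i < h \<Longrightarrow> j < h \<Longrightarrow>
      \<theta>1 \<le> min_eigenvalue2 (Varg (H i)) (Varg (H j)) (Eg (\<lambda>g. g * H i g) * Eg (\<lambda>g. g * H j g))"
  shows "min \<theta>1 \<theta>2 * (\<Sum>i<h. \<Sum>k<p. (c i k)\<^sup>2)
    \<le> integral\<^sup>L (gauss_vec p) (\<lambda>y. (gauss_feature_sum H c h p y)\<^sup>2)
      - (integral\<^sup>L (gauss_vec p) (gauss_feature_sum H c h p))\<^sup>2"
proof -
  have m: "moment (H i) 2 2 = Eg (\<lambda>g. (g * H i g)\<^sup>2)" "moment (H i) 1 1 = Eg (\<lambda>g. g * H i g)"
    "moment (H i) 1 2 = Eg (\<lambda>g. g\<^sup>2 * H i g)" "moment (H i) 2 0 = Eg (\<lambda>g. (H i g)\<^sup>2)"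
    "moment (H i) 1 0 = Eg (H i)" for i
    unfolding moment_def by (simp_all add: power_mult_distrib mult.commute)
  show ?thesis
    unfolding integral_gauss_feature_sum(2)[OF hp H] integral_gauss_feature_sum_square(2)[OF hp H]
      pair_moment_def quartic_form_decomposition[OF hp]
    by (rule quartic_form_decomposition_ge[OF hp]) (use D V in \<open>simp_all add: m m[unfolded One_nat_def] Varg_def\<close>)
qed

context
  fixes \<sigma> :: "real \<Rightarrow> real" and \<alpha> \<beta> :: real
  assumes bessel: "\<And>x. x \<in> {\<alpha>..\<beta>} \<Longrightarrow> (Eg (\<lambda>g. g * eta \<sigma> x g))\<^sup>2 \<le> Varg (eta \<sigma> x)
    \<and> (Eg (\<lambda>g. g\<^sup>2 * eta \<sigma> x g))\<^sup>2 \<le> Varg (\<lambda>g. g * eta \<sigma> x g)"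
begin

lemma theta2_le:
  "x \<in> {\<alpha>..\<beta>} \<Longrightarrow> theta2 \<sigma> \<alpha> \<beta> \<le> Varg (\<lambda>g. g * eta \<sigma> x g) - (Eg (\<lambda>g. g\<^sup>2 * eta \<sigma> x g))\<^sup>2"
  unfolding theta2_def by (rule cInf_lower) (use bessel in \<open>auto intro!: bdd_belowI[of _ 0]\<close>)

lemma theta1_le:
  assumes "x \<in> {\<alpha>..\<beta>}" "y \<in> {\<alpha>..\<beta>}"
  shows "theta1 \<sigma> \<alpha> \<beta> \<le> min_eigenvalue2 (Varg (eta \<sigma> x)) (Varg (eta \<sigma> y))
    (Eg (\<lambda>g. g * eta \<sigma> x g) * Eg (\<lambda>g. g * eta \<sigma> y g))"
proof -
  let ?m = "\<lambda>(x, y). min_eigenvalue2 (Varg (eta \<sigma> x)) (Varg (eta \<sigma> y))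
    (Eg (\<lambda>g. g * eta \<sigma> x g) * Eg (\<lambda>g. g * eta \<sigma> y g))"
  have "theta1 \<sigma> \<alpha> \<beta> = Inf (?m ` ({\<alpha>..\<beta>} \<times> {\<alpha>..\<beta>}))"
    unfolding theta1_def min_eigenvalue2_def by (simp add: case_prod_beta power_mult_distrib mult.assoc)
  moreover have "0 \<le> ?m (x, y)" if "x \<in> {\<alpha>..\<beta>}" "y \<in> {\<alpha>..\<beta>}" for x y
  proof -
    have "(Eg (\<lambda>g. g * eta \<sigma> x g))\<^sup>2 \<le> Varg (eta \<sigma> x)"
      and "(Eg (\<lambda>g. g * eta \<sigma> y g))\<^sup>2 \<le> Varg (eta \<sigma> y)"
      using bessel that by auto
    moreover have "0 \<le> Varg (eta \<sigma> x)" "0 \<le> Varg (eta \<sigma> y)"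
      using calculation by (auto intro: order.trans[OF zero_le_power2])
    ultimately show ?thesis
      by (auto intro!: min_eigenvalue2_nonneg mult_mono simp: power_mult_distrib)
  qed
  ultimately show ?thesis
    using assms by (auto intro!: cInf_lower bdd_belowI[of _ 0])
qed

end

lemma integrable_mult_of_square_integrable:
  fixes f g :: "'a \<Rightarrow> real"
  assumes "integrable M f" "integrable M g" "integrable M (\<lambda>x. (f x)\<^sup>2)" "integrable M (\<lambda>x. (g x)\<^sup>2)"
  shows "integrable M (\<lambda>x. f x * g x)"
proof (rule Bochner_Integration.integrable_bound)
  show "integrable M (\<lambda>x. (f x)\<^sup>2 + (g x)\<^sup>2)" using assms by simp
  show "(\<lambda>x. f x * g x) \<in> borel_measurable M" using assms by simp
  show "AE x in M. norm (f x * g x) \<le> norm ((f x)\<^sup>2 + (g x)\<^sup>2)"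
  proof (intro AE_I2)
    fix x
    have "2 * (\<bar>f x\<bar> * \<bar>g x\<bar>) \<le> (f x)\<^sup>2 + (g x)\<^sup>2"
      using sum_squares_bound[of "\<bar>f x\<bar>" "\<bar>g x\<bar>"] by (simp add: power2_eq_square)
    moreover have "0 \<le> \<bar>f x\<bar> * \<bar>g x\<bar>" "0 \<le> (f x)\<^sup>2 + (g x)\<^sup>2" by simp_all
    ultimately have "\<bar>f x\<bar> * \<bar>g x\<bar> \<le> (f x)\<^sup>2 + (g x)\<^sup>2" by linarith
    then show "norm (f x * g x) \<le> norm ((f x)\<^sup>2 + (g x)\<^sup>2)" by (simp add: abs_mult)
  qed
qed

lemma cov_matrix_quadratic_form:
  fixes Z :: "nat \<Rightarrow> 'a \<Rightarrow> real"
  assumes Z: "\<And>a. a < N \<Longrightarrow> integrable M (Z a)" "\<And>a. a < N \<Longrightarrow> integrable M (\<lambda>x. (Z a x)\<^sup>2)"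
  shows "(\<Sum>a<N. \<Sum>b<N. v a * (cov_matrix M Z a b - (if a = b then z else 0)) * v b)
    = integral\<^sup>L M (\<lambda>x. (\<Sum>a<N. v a * Z a x)\<^sup>2) - (integral\<^sup>L M (\<lambda>x. \<Sum>a<N. v a * Z a x))\<^sup>2
      - z * (\<Sum>a<N. (v a)\<^sup>2)"
proof -
  have ZZ: "integrable M (\<lambda>x. Z a x * Z b x)" if "a < N" "b < N" for a b
    using integrable_mult_of_square_integrable Z that by blast
  have "(\<lambda>x. (\<Sum>a<N. v a * Z a x)\<^sup>2) = (\<lambda>x. \<Sum>a<N. \<Sum>b<N. v a * v b * (Z a x * Z b x))"
    by (simp add: power2_eq_square sum_product algebra_simps)
  then have "integral\<^sup>L M (\<lambda>x. (\<Sum>a<N. v a * Z a x)\<^sup>2)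
      = (\<Sum>a<N. \<Sum>b<N. v a * v b * integral\<^sup>L M (\<lambda>x. Z a x * Z b x))"
    using integral_double_sum(2)[where M = M and A = "{..<N}" and B = "{..<N}"
        and f = "\<lambda>a b x. v a * v b * (Z a x * Z b x)"] ZZ by simp
  moreover have "integral\<^sup>L M (\<lambda>x. \<Sum>a<N. v a * Z a x) = (\<Sum>a<N. v a * integral\<^sup>L M (Z a))"
    using Z by (subst Bochner_Integration.integral_sum) auto
  moreover have "(\<Sum>a<N. \<Sum>b<N. v a * (if a = b then z else 0) * v b)
      = (\<Sum>a<N. \<Sum>b<N. if b = a then z * (v a)\<^sup>2 else 0)"
    by (intro sum.cong refl) (auto simp: power2_eq_square)
  then have "(\<Sum>a<N. \<Sum>b<N. v a * (if a = b then z else 0) * v b) = z * (\<Sum>a<N. (v a)\<^sup>2)"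
    by (simp add: sum_distrib_left)
  moreover have "(\<Sum>a<N. \<Sum>b<N. v a * v b * (integral\<^sup>L M (Z a) * integral\<^sup>L M (Z b)))
      = (\<Sum>a<N. v a * integral\<^sup>L M (Z a))\<^sup>2"
    by (simp add: power2_eq_square sum_product mult_ac)
  moreover have "(\<Sum>a<N. \<Sum>b<N. v a * (cov_matrix M Z a b - (if a = b then z else 0)) * v b)
      = (\<Sum>a<N. \<Sum>b<N. v a * v b * integral\<^sup>L M (\<lambda>x. Z a x * Z b x))
        - (\<Sum>a<N. \<Sum>b<N. v a * v b * (integral\<^sup>L M (Z a) * integral\<^sup>L M (Z b)))
        - (\<Sum>a<N. \<Sum>b<N. v a * (if a = b then z else 0) * v b)"
    unfolding cov_matrix_def by (simp add: sum_subtractf sum.distrib algebra_simps)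
  ultimately show ?thesis by simp
qed

section \<open>Reduction of the Kronecker feature to a Gaussian feature sum\<close>

lemma sum_lessThan_mult:
  fixes f :: "nat \<Rightarrow> real"
  shows "(\<Sum>a<h * p. f a) = (\<Sum>i<h. \<Sum>j<p. f (i * p + j))"
proof (induction h)
  case (Suc h)
  have "{..<Suc h * p} = {..<h * p} \<union> {h * p..<h * p + p}" by auto
  then have "(\<Sum>a<Suc h * p. f a) = (\<Sum>a<h * p. f a) + (\<Sum>a\<in>{h * p..<h * p + p}. f a)"
    by (simp add: sum.union_disjoint ivl_disj_int)
  also have "(\<Sum>a\<in>{h * p..<h * p + p}. f a) = (\<Sum>j<p. f (h * p + j))"
    using sum.shift_bounds_nat_ivl[of f 0 "h * p" p] by (simp add: atLeast0LessThan add.commute)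
  finally show ?case using Suc by simp
qed simp

lemma row_norm_mem_singular_values:
  fixes W :: "nat \<Rightarrow> nat \<Rightarrow> real"
  assumes orth: "\<forall>i<h. \<forall>j<h. i \<noteq> j \<longrightarrow> (\<Sum>k<p. W i k * W j k) = 0" and "i < h"
  shows "sqrt (\<Sum>k<p. (W i k)\<^sup>2) \<in> singular_values h p W"
  unfolding singular_values_def
proof (intro CollectI conjI exI[of _ "unit_vec i"] allI impI)
  show "\<exists>i'<h. unit_vec i i' \<noteq> 0" using \<open>i < h\<close> by (auto simp: unit_vec_def)
  fix i' assume "i' < h"
  have "(\<Sum>j<h. (\<Sum>k<p. W i' k * W j k) * unit_vec i j) = (\<Sum>k<p. W i' k * W i k)"
    using \<open>i < h\<close> by (simp add: unit_vec_def if_distrib[of "\<lambda>x. _ * x"] sum.delta cong: if_cong)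
  also have "\<dots> = (sqrt (\<Sum>k<p. (W i k)\<^sup>2))\<^sup>2 * unit_vec i i'"
    using orth \<open>i < h\<close> \<open>i' < h\<close> by (auto simp: unit_vec_def power2_eq_square sum_nonneg)
  finally show "(\<Sum>j<h. (\<Sum>k<p. W i' k * W j k) * unit_vec i j) = (sqrt (\<Sum>k<p. (W i k)\<^sup>2))\<^sup>2 * unit_vec i i'" .
qed (simp add: sum_nonneg)

lemma row_norm_pos:
  fixes W :: "nat \<Rightarrow> nat \<Rightarrow> real"
  assumes "k < p" "W i k \<noteq> 0"
  shows "0 < sqrt (\<Sum>k<p. (W i k)\<^sup>2)"
proof -
  have "0 < (W i k)\<^sup>2" using assms by simp
  also have "\<dots> \<le> (\<Sum>k<p. (W i k)\<^sup>2)" using assms by (intro member_le_sum) auto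
  finally show ?thesis by simp
qed

definition kron_coef :: "nat \<Rightarrow> ((nat \<Rightarrow> real) \<Rightarrow> nat \<Rightarrow> real) \<Rightarrow> (nat \<Rightarrow> real) \<Rightarrow> nat \<Rightarrow> nat \<Rightarrow> real" where
  "kron_coef p T v i k = (\<Sum>j<p. v (i * p + j) * T (unit_vec j) k)"

lemma sum_kron_coef_square:
  assumes T: "gauss_isometry p T"
  shows "(\<Sum>i<h. \<Sum>k<p. (kron_coef p T v i k)\<^sup>2) = (\<Sum>a<h * p. (v a)\<^sup>2)"
proof -
  have Tdot: "(\<Sum>k<p. T (unit_vec j) k * T (unit_vec j') k) = (if j' = j then 1 else 0)" if "j' < p" for j j'
    using T dot_unit_vec[OF that, of "unit_vec j"] unfolding gauss_isometry_def dot_def[symmetric]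
    by (simp add: unit_vec_def)
  have "(\<Sum>k<p. (kron_coef p T v i k)\<^sup>2) = (\<Sum>j<p. (v (i * p + j))\<^sup>2)" for i
  proof -
    have "(\<Sum>k<p. (kron_coef p T v i k)\<^sup>2)
        = (\<Sum>k<p. \<Sum>j<p. \<Sum>j'<p. v (i * p + j) * v (i * p + j') * (T (unit_vec j) k * T (unit_vec j') k))"
      unfolding kron_coef_def power2_eq_square sum_product by (intro sum.cong refl) (simp add: mult_ac)
    also have "\<dots> = (\<Sum>j<p. \<Sum>j'<p. \<Sum>k<p. v (i * p + j) * v (i * p + j') * (T (unit_vec j) k * T (unit_vec j') k))"
      by (subst sum.swap) (rule sum.cong[OF refl], rule sum.swap)
    also have "\<dots> = (\<Sum>j<p. \<Sum>j'<p. v (i * p + j) * v (i * p + j')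
        * (\<Sum>k<p. T (unit_vec j) k * T (unit_vec j') k))"
      by (simp add: sum_distrib_left)
    also have "\<dots> = (\<Sum>j<p. \<Sum>j'<p. if j' = j then v (i * p + j) * v (i * p + j') else 0)"
      by (intro sum.cong refl) (simp add: Tdot)
    finally show ?thesis by (simp add: power2_eq_square)
  qed
  then show ?thesis by (simp add: sum_lessThan_mult)
qed

lemma kron_feature_sum_eq_gauss_feature_sum:
  fixes W u :: "nat \<Rightarrow> nat \<Rightarrow> real" and s :: "nat \<Rightarrow> real"
  assumes hp: "h \<le> p" and T: "gauss_isometry p T" and Tu: "\<forall>i<h. agree p (T (u i)) (unit_vec i)"
    and Wsu: "\<And>i k. i < h \<Longrightarrow> W i k = s i * u i k"
  shows "(\<Sum>a<h * p. v a * kron_feature p \<sigma> W a x)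
    = gauss_feature_sum (\<lambda>i t. deriv \<sigma> (s i * t)) (kron_coef p T v) h p (T x)"
proof -
  have Tdot: "dot p (T x) (T y) = dot p x y" for x y using T unfolding gauss_isometry_def by blast
  have row: "(\<Sum>k<p. W i k * x k) = s i * T x i" if "i < h" for i
  proof -
    have "(\<Sum>k<p. W i k * x k) = s i * dot p (u i) x"
      unfolding dot_def using Wsu[OF that] by (simp add: sum_distrib_left mult.assoc)
    also have "dot p (u i) x = dot p (T (u i)) (T x)" by (simp add: Tdot)
    also have "dot p (T (u i)) (T x) = T x i"
      using agree_dot Tu dot_unit_vec dot_commute that hp by (metis order.strict_trans2)
    finally show ?thesis .
  qed
  have coord: "x j = (\<Sum>k<p. T (unit_vec j) k * T x k)" if "j < p" for j
    using Tdot[of "unit_vec j" x] dot_unit_vec[OF that, of x] dot_commute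
    by (simp add: dot_def mult.commute)
  have "kron_feature p \<sigma> W (i * p + j) x = deriv \<sigma> (s i * T x i) * (\<Sum>k<p. T (unit_vec j) k * T x k)"
    if "i < h" "j < p" for i j
    using that unfolding kron_feature_def by (simp add: row coord[OF that(2), symmetric])
  then have "(\<Sum>a<h * p. v a * kron_feature p \<sigma> W a x)
      = (\<Sum>i<h. \<Sum>j<p. \<Sum>k<p. v (i * p + j) * T (unit_vec j) k * (deriv \<sigma> (s i * T x i) * T x k))"
    unfolding sum_lessThan_mult by (intro sum.cong refl) (simp add: sum_distrib_left mult_ac)
  also have "\<dots> = gauss_feature_sum (\<lambda>i t. deriv \<sigma> (s i * t)) (kron_coef p T v) h p (T x)"
    unfolding gauss_feature_sum_def kron_coef_def sum_distrib_right
    by (rule sum.cong[OF refl], rule sum.swap)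
  finally show ?thesis .
qed

context
  fixes \<sigma> :: "real \<Rightarrow> real" and \<alpha> \<beta> :: real
  assumes diff: "\<forall>t. \<sigma> differentiable (at t)"
    and moments: "\<forall>x\<in>{\<alpha>..\<beta>}. \<forall>k::nat\<le>2. integrable std_normal (\<lambda>g. (g ^ k * eta \<sigma> x g)\<^sup>2)"
begin

lemma integrable_eta_power_mult:
  assumes "x \<in> {\<alpha>..\<beta>}" "a \<le> 2" "b \<le> 2"
  shows "integrable std_normal (\<lambda>t. eta \<sigma> x t ^ a * t ^ b)"
proof (rule integrable_std_normal_power_mult)
  have [measurable]: "deriv \<sigma> \<in> borel_measurable borel" using borel_measurable_deriv diff by blast
  show "eta \<sigma> x \<in> borel_measurable borel" unfolding eta_def[abs_def] by measurable
  show "integrable std_normal (\<lambda>t. (eta \<sigma> x t)\<^sup>2)" "integrable std_normal (\<lambda>t. (t\<^sup>2 * eta \<sigma> x t)\<^sup>2)"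
    using moments assms(1) by (auto dest!: bspec[of _ _ x] dest: spec[of _ 0] spec[of _ 2])
qed (use assms in auto)

lemma eta_bessel:
  assumes "x \<in> {\<alpha>..\<beta>}"
  shows "(Eg (\<lambda>g. g * eta \<sigma> x g))\<^sup>2 \<le> Varg (eta \<sigma> x)
    \<and> (Eg (\<lambda>g. g\<^sup>2 * eta \<sigma> x g))\<^sup>2 \<le> Varg (\<lambda>g. g * eta \<sigma> x g)"
proof
  have int: "integrable std_normal (\<lambda>t. eta \<sigma> x t ^ a * t ^ b)" if "a \<le> 2" "b \<le> 2" for a b
    using integrable_eta_power_mult[OF assms that] .
  show "(Eg (\<lambda>g. g * eta \<sigma> x g))\<^sup>2 \<le> Varg (eta \<sigma> x)"
    by (rule Eg_mult_square_le_Varg) (use int[of 1 0] int[of 1 1] int[of 2 0] in \<open>simp_all add: mult.commute\<close>)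
  show "(Eg (\<lambda>g. g\<^sup>2 * eta \<sigma> x g))\<^sup>2 \<le> Varg (\<lambda>g. g * eta \<sigma> x g)"
    using Eg_mult_square_le_Varg[of "\<lambda>g. g * eta \<sigma> x g"] int[of 1 1] int[of 1 2] int[of 2 2]
    by (simp add: power2_eq_square mult_ac)
qed

lemma low_moments_integrable_deriv_scaled:
  assumes "\<forall>i<h. s i \<in> {\<alpha>..\<beta>}"
  shows "low_moments_integrable h (\<lambda>i t. deriv \<sigma> (s i * t))"
  using integrable_eta_power_mult assms unfolding low_moments_integrable_def eta_def by blast

end

lemma kron_feature_reduction:
  fixes W :: "nat \<Rightarrow> nat \<Rightarrow> real"
  assumes hp: "h \<le> p"
    and orth: "\<forall>i<h. \<forall>j<h. i \<noteq> j \<longrightarrow> (\<Sum>k<p. W i k * W j k) = 0"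
    and nonzero: "\<forall>i<h. \<exists>k<p. W i k \<noteq> 0"
  obtains T s where "gauss_isometry p T" "\<And>i. i < h \<Longrightarrow> s i \<in> singular_values h p W"
    "\<And>v x. (\<Sum>a<h * p. v a * kron_feature p \<sigma> W a x)
       = gauss_feature_sum (\<lambda>i t. deriv \<sigma> (s i * t)) (kron_coef p T v) h p (T x)"
proof -
  define s where "s i = sqrt (\<Sum>k<p. (W i k)\<^sup>2)" for i
  define u where "u i k = W i k / s i" for i k
  have s_pos: "0 < s i" if "i < h" for i
    using nonzero row_norm_pos that unfolding s_def by blast
  have "dot p (u i) (u j) = (if i = j then 1 else 0)" if "i < h" "j < h" for i j
  proof -
    have "dot p (u i) (u j) = (\<Sum>k<p. W i k * W j k) / (s i * s j)"
      unfolding dot_def u_def by (simp add: sum_divide_distrib)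
    then show ?thesis
      using orth that s_pos[OF that(1)] unfolding s_def by (auto simp: power2_eq_square sum_nonneg)
  qed
  then obtain T where T: "gauss_isometry p T" "\<forall>i<h. agree p (T (u i)) (unit_vec i)"
    using exists_gauss_isometry_orthonormal_to_basis[OF hp] by blast
  have Wsu: "W i k = s i * u i k" if "i < h" for i k
    using s_pos[OF that] unfolding u_def by simp
  show thesis
  proof (rule that[OF T(1)])
    show "s i \<in> singular_values h p W" if "i < h" for i
      using row_norm_mem_singular_values[OF orth that] unfolding s_def .
    show "(\<Sum>a<h * p. v a * kron_feature p \<sigma> W a x)
       = gauss_feature_sum (\<lambda>i t. deriv \<sigma> (s i * t)) (kron_coef p T v) h p (T x)" for v x
      by (rule kron_feature_sum_eq_gauss_feature_sum[OF hp T Wsu])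
  qed
qed

lemma kron_feature_cov_quadratic_form:
  fixes H :: "nat \<Rightarrow> real \<Rightarrow> real" and v :: "nat \<Rightarrow> real"
  assumes hp: "h \<le> p" and T: "gauss_isometry p T" and low: "low_moments_integrable h H"
    and reduction: "\<And>v x. (\<Sum>a<h * p. v a * kron_feature p \<sigma> W a x)
       = gauss_feature_sum H (kron_coef p T v) h p (T x)"
  shows "(\<Sum>a<h * p. \<Sum>b<h * p. v a * (cov_matrix (gauss_vec p) (kron_feature p \<sigma> W) a b
        - (if a = b then z else 0)) * v b)
    = integral\<^sup>L (gauss_vec p) (\<lambda>y. (gauss_feature_sum H (kron_coef p T v) h p y)\<^sup>2)
      - (integral\<^sup>L (gauss_vec p) (gauss_feature_sum H (kron_coef p T v) h p))\<^sup>2 - z * (\<Sum>a<h * p. (v a)\<^sup>2)"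
proof -
  define F where "F v = gauss_feature_sum H (kron_coef p T v) h p" for v
  note F_int = integral_gauss_feature_sum[OF hp low] integral_gauss_feature_sum_square[OF hp low]
  have Z: "kron_feature p \<sigma> W a x = F (\<lambda>b. if b = a then 1 else 0) (T x)" if "a < h * p" for a x
  proof -
    have "(\<Sum>b<h * p. (if b = a then 1 else 0) * kron_feature p \<sigma> W b x)
        = (\<Sum>b<h * p. if b = a then kron_feature p \<sigma> W b x else 0)"
      by (intro sum.cong) auto
    then show ?thesis using reduction[of "\<lambda>b. if b = a then 1 else 0" x] that by (simp add: F_def)
  qed
  have "integrable (gauss_vec p) (kron_feature p \<sigma> W a)"
    "integrable (gauss_vec p) (\<lambda>x. (kron_feature p \<sigma> W a x)\<^sup>2)" if "a < h * p" for a
    using gauss_isometry_integral(1)[OF T F_int(1)] gauss_isometry_integral(1)[OF T F_int(3)]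
    unfolding Z[OF that, abs_def] F_def by simp_all
  moreover have "integral\<^sup>L (gauss_vec p) (\<lambda>x. (\<Sum>a<h * p. v a * kron_feature p \<sigma> W a x)\<^sup>2)
      = integral\<^sup>L (gauss_vec p) (\<lambda>y. (F v y)\<^sup>2)"
    "integral\<^sup>L (gauss_vec p) (\<lambda>x. \<Sum>a<h * p. v a * kron_feature p \<sigma> W a x)
      = integral\<^sup>L (gauss_vec p) (F v)"
    using gauss_isometry_integral(2)[OF T F_int(3)] gauss_isometry_integral(2)[OF T F_int(1)]
    unfolding reduction F_def by simp_all
  ultimately show ?thesis by (simp add: cov_matrix_quadratic_form F_def)
qed

theorem mainTheorem17:
  fixes h p :: nat and W :: "nat \<Rightarrow> nat \<Rightarrow> real" and \<alpha> \<beta> :: real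
    and \<sigma> :: "real \<Rightarrow> real"
  assumes "h \<le> p"
    and orth: "\<forall>i<h. \<forall>j<h. i \<noteq> j \<longrightarrow> (\<Sum>k<p. W i k * W j k) = 0"
    and nonzero: "\<forall>i<h. \<exists>k<p. W i k \<noteq> 0"
    and "0 < \<alpha>" and "\<alpha> \<le> \<beta>"
    and sv: "singular_values h p W \<subseteq> {\<alpha>..\<beta>}"
    and diff: "\<forall>t. \<sigma> differentiable (at t)"
    and moments: "\<forall>x\<in>{\<alpha>..\<beta>}. \<forall>k::nat\<le>2.
                    integrable std_normal (\<lambda>g. (g ^ k * eta \<sigma> x g)\<^sup>2)"
  shows "loewner_ge_scalar (h * p) (cov_matrix (gauss_vec p) (kron_feature p \<sigma> W))
           (zeta \<sigma> \<alpha> \<beta>)"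
proof -
  obtain T s where T: "gauss_isometry p T" and s_sv: "\<And>i. i < h \<Longrightarrow> s i \<in> singular_values h p W"
    and reduction: "\<And>v x. (\<Sum>a<h * p. v a * kron_feature p \<sigma> W a x)
       = gauss_feature_sum (\<lambda>i t. deriv \<sigma> (s i * t)) (kron_coef p T v) h p (T x)"
    by (rule kron_feature_reduction[where \<sigma> = \<sigma>, OF assms(1) orth nonzero]) iprover
  have s: "\<forall>i<h. s i \<in> {\<alpha>..\<beta>}" using s_sv sv by blast
  have low: "low_moments_integrable h (\<lambda>i t. deriv \<sigma> (s i * t))"
    by (rule low_moments_integrable_deriv_scaled[OF diff moments s])
  show ?thesis unfolding loewner_ge_scalar_def
  proof
    fix v :: "nat \<Rightarrow> real"
    let ?F = "gauss_feature_sum (\<lambda>i t. deriv \<sigma> (s i * t)) (kron_coef p T v) h p"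
    have "zeta \<sigma> \<alpha> \<beta> * (\<Sum>a<h * p. (v a)\<^sup>2)
        \<le> integral\<^sup>L (gauss_vec p) (\<lambda>y. (?F y)\<^sup>2) - (integral\<^sup>L (gauss_vec p) ?F)\<^sup>2"
      unfolding zeta_def sum_kron_coef_square[OF T, symmetric]
      using s theta2_le[OF eta_bessel[OF diff moments]] theta1_le[OF eta_bessel[OF diff moments]]
      by (intro variance_gauss_feature_sum_ge[OF assms(1) low]) (auto simp: eta_def[abs_def])
    then show "0 \<le> (\<Sum>a<h * p. \<Sum>b<h * p. v a * (cov_matrix (gauss_vec p) (kron_feature p \<sigma> W) a b
        - (if a = b then zeta \<sigma> \<alpha> \<beta> else 0)) * v b)"
      by (simp add: kron_feature_cov_quadratic_form[OF assms(1) T low reduction])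
  qed
qed

end
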